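(* Let $p_0$ be a real smooth function on $T^*\mathbb{R}^n\simeq\mathbb{R}^{2n}$ whose critical point is $z_0=0$, with $p_0(z)=E_c+\sum_{j=k}^N\mathfrak{p}_j(z)+\mathcal{O}(\|z\|^{N+1})$ near $0$, where $k>2$ and each $\mathfrak{p}_j$ is homogeneous of degree $j$. Let $\Phi_t$ be the Hamiltonian flow of $p_0$, and let $S(t,x,\xi)$ be a smooth local generating function of the flow near $(x,\xi)=0$, i.e. $\Phi_t(\partial_\xi S(t,x,\xi),\xi)=(x,\partial_xS(t,x,\xi))$, satisfying the Hamilton–Jacobi equation $\partial_tS(t,x,\xi)+p_0(x,\partial_xS(t,x,\xi))=0$ with $S(0,x,\xi)=\langle x,\xi\rangle$. Then near the origin $$S(t,x,\xi)-\langle x,\xi\rangle+tE_c=-t\big(\mathfrak{p}_k(x,\xi)+R_{k+1}(x,\xi)+tG_{k+1}(t,x,\xi)\big),$$ where $R_{k+1}(x,\xi)=\mathcal{O}(\|(x,\xi)\|^{k+1})$ and $G_{k+1}(t,x,\xi)=\mathcal{O}(\|(x,\xi)\|^{k+1})$, uniformly for $t$ in a compact subset of $\mathbb{R}$.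
   Context: $z=(x,\xi)$ denotes a point of phase space; the Hamiltonian vector field is $H_{p_0}=\partial_\xi p_0\cdot\partial_x-\partial_xp_0\cdot\partial_\xi$ and $\Phi_t=\exp(tH_{p_0})$. The paper takes the critical point to be at the origin as a standing normalization. *)

theory Defs
  imports "HOL-Analysis.Analysis"
begin

definition dir_deriv :: "'a::real_normed_vector \<Rightarrow> ('a \<Rightarrow> real) \<Rightarrow> 'a \<Rightarrow> real" where
  "dir_deriv v f x = deriv (\<lambda>s. f (x + s *\<^sub>R v)) 0"

fun iter_pd :: "'a list \<Rightarrow> ('a::real_normed_vector \<Rightarrow> real) \<Rightarrow> 'a \<Rightarrow> real" where
  "iter_pd [] f = f"
| "iter_pd (v # vs) f = dir_deriv v (iter_pd vs f)"

definition smooth_on :: "'a::euclidean_space set \<Rightarrow> ('a \<Rightarrow> real) \<Rightarrow> bool" where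
  "smooth_on U f \<longleftrightarrow>
     (\<forall>vs. set vs \<subseteq> Basis \<longrightarrow>
        continuous_on U (iter_pd vs f) \<and>
        (\<forall>v\<in>Basis. \<forall>x\<in>U. (\<lambda>s. iter_pd vs f (x + s *\<^sub>R v)) differentiable (at 0)))"

definition pgrad :: "(real^'n \<Rightarrow> real) \<Rightarrow> real^'n \<Rightarrow> real^'n" where
  "pgrad f x = (\<chi> i. frechet_derivative f (at x) (axis i 1))"

definition homogeneous_deg :: "nat \<Rightarrow> ('a::real_vector \<Rightarrow> real) \<Rightarrow> bool" where
  "homogeneous_deg j P \<longleftrightarrow> (\<forall>c z. P (c *\<^sub>R z) = c ^ j * P z)"

definition ham_field :: "(real^'n \<Rightarrow> real^'n \<Rightarrow> real) \<Rightarrow> (real^'n) \<times> (real^'n) \<Rightarrow> (real^'n) \<times> (real^'n)" where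
  "ham_field p z = (pgrad (\<lambda>\<xi>. p (fst z) \<xi>) (snd z), - pgrad (\<lambda>x. p x (snd z)) (fst z))"

definition is_ham_flow ::
  "(real^'n \<Rightarrow> real^'n \<Rightarrow> real) \<Rightarrow> (real \<times> ((real^'n) \<times> (real^'n))) set
     \<Rightarrow> (real \<Rightarrow> (real^'n) \<times> (real^'n) \<Rightarrow> (real^'n) \<times> (real^'n)) \<Rightarrow> bool" where
  "is_ham_flow p \<Omega> \<Phi> \<longleftrightarrow> open \<Omega> \<and>
     (\<forall>z. (0, z) \<in> \<Omega> \<and> \<Phi> 0 z = z \<and> is_interval {t. (t, z) \<in> \<Omega>}) \<and>
     (\<forall>t z. (t, z) \<in> \<Omega> \<longrightarrow> ((\<lambda>s. \<Phi> s z) has_vector_derivative ham_field p (\<Phi> t z)) (at t))"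

end

(*
  The Hamiltonian field of p0 vanishes to order k - 1 at the critical point, since p0 - E_c
  vanishes to order k there. By Gronwall, the flow therefore moves a point z near the origin by
  O(|z|^(k-1) |t|), uniformly for t in a compact set. In the generating relation
  Phi_t(d_xi S, xi) = (x, d_x S) this has two consequences: d_xi S(t, 0, 0) = 0, because a small
  nonzero starting point (y, 0) cannot be carried to (0, eta) by a displacement of size o(|y|);
  and d_x S(t, x, xi) - xi = O(|z|^(k-1) |t|). The Hamilton-Jacobi equation then gives
  d/dt (S - <x, xi> + t p0(x, xi)) = p0(x, xi) - p0(x, d_x S) = O(|z|^(2k-2) |t|), so that
  S - <x, xi> + t p0 = O(t^2 |z|^(k+1)) because 2k - 2 >= k + 1. Writing
  p0 = E_c + p_k + O(|z|^(k+1)) yields the expansion.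
*)
theory Submission
  imports Defs
begin

section \<open>Partial derivatives of smooth functions\<close>

lemma has_real_derivative_along_line:
  fixes g :: "'a::real_vector \<Rightarrow> real"
  assumes "((\<lambda>s. g (p + s0 *\<^sub>R b + s *\<^sub>R b)) has_real_derivative D) (at 0)"
  shows "((\<lambda>s. g (p + s *\<^sub>R b)) has_real_derivative D) (at s0)"
proof -
  have "(\<lambda>s. g (p + (s + s0) *\<^sub>R b)) = (\<lambda>s. g (p + s0 *\<^sub>R b + s *\<^sub>R b))"
    by (simp add: scaleR_add_left add_ac)
  then show ?thesis
    using DERIV_shift[of "\<lambda>s. g (p + s *\<^sub>R b)" D 0 s0] assms by simp
qed

lemma smooth_on_continuous_on:
  assumes "smooth_on U f" "set vs \<subseteq> Basis"
  shows "continuous_on U (iter_pd vs f)"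
  using assms unfolding smooth_on_def by blast

lemma smooth_on_has_real_derivative_along_line:
  assumes sm: "smooth_on U f" and vs: "set vs \<subseteq> Basis" and b: "b \<in> Basis"
    and pU: "p + s0 *\<^sub>R b \<in> U"
  shows "((\<lambda>s. iter_pd vs f (p + s *\<^sub>R b)) has_real_derivative iter_pd (b # vs) f (p + s0 *\<^sub>R b)) (at s0)"
proof (rule has_real_derivative_along_line)
  let ?g = "\<lambda>s. iter_pd vs f (p + s0 *\<^sub>R b + s *\<^sub>R b)"
  have "?g differentiable (at 0)"
    using sm vs b pU unfolding smooth_on_def by blast
  then have "(?g has_real_derivative deriv ?g 0) (at 0)"
    using DERIV_deriv_iff_real_differentiable by blast
  then show "(?g has_real_derivative iter_pd (b # vs) f (p + s0 *\<^sub>R b)) (at 0)"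
    by (simp add: dir_deriv_def)
qed

lemma real_increment_linear_bound:
  fixes f f' :: "real \<Rightarrow> real"
  assumes der: "\<And>s. s \<in> closed_segment 0 c \<Longrightarrow> (f has_real_derivative f' s) (at s)"
    and bd: "\<And>s. s \<in> closed_segment 0 c \<Longrightarrow> \<bar>f' s - D\<bar> \<le> e"
  shows "\<bar>f c - f 0 - c * D\<bar> \<le> e * \<bar>c\<bar>"
proof -
  have "norm ((\<lambda>s. f s - s * D) c - (\<lambda>s. f s - s * D) 0) \<le> e * norm (c - 0)"
  proof (rule field_differentiable_bound[of "closed_segment 0 c"])
    fix s assume s: "s \<in> closed_segment 0 c"
    have "((\<lambda>s. f s - s * D) has_real_derivative f' s - 1 * D) (at s)"
      by (intro DERIV_diff der[OF s] DERIV_cmult_right DERIV_ident)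
    then show "((\<lambda>s. f s - s * D) has_real_derivative f' s - D) (at s within closed_segment 0 c)"
      by (simp add: has_field_derivative_at_within)
    show "norm (f' s - D) \<le> e" using bd[OF s] by simp
  qed auto
  then show ?thesis by simp
qed

lemma norm_sum_Basis_subset_le:
  fixes h :: "'a::euclidean_space"
  assumes "I \<subseteq> Basis"
  shows "norm (\<Sum>b\<in>I. (h \<bullet> b) *\<^sub>R b) \<le> real (card I) * norm h"
proof -
  have "norm (\<Sum>b\<in>I. (h \<bullet> b) *\<^sub>R b) \<le> (\<Sum>b\<in>I. norm ((h \<bullet> b) *\<^sub>R b))"
    by (rule norm_sum)
  also have "\<dots> \<le> (\<Sum>b\<in>I. norm h)"
    using assms Basis_le_norm by (intro sum_mono) (auto simp: subset_iff)
  finally show ?thesis by simp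
qed

lemma coordinatewise_increment_bound:
  fixes g :: "'a::euclidean_space \<Rightarrow> real"
  assumes der: "\<And>b y. b \<in> Basis \<Longrightarrow> y \<in> U \<Longrightarrow> ((\<lambda>s. g (y + s *\<^sub>R b)) has_real_derivative D b y) (at 0)"
    and near: "\<And>y. dist y x < \<delta> \<Longrightarrow> y \<in> U \<and> (\<forall>b\<in>Basis. \<bar>D b y - D b x\<bar> \<le> e)"
    and e: "e \<ge> 0" and I: "I \<subseteq> Basis" and h: "real (card I) * norm h < \<delta>"
  shows "\<bar>g (x + (\<Sum>b\<in>I. (h \<bullet> b) *\<^sub>R b)) - g x - (\<Sum>b\<in>I. (h \<bullet> b) * D b x)\<bar> \<le> real (card I) * e * norm h"
proof -
  have "finite I" using I finite_Basis finite_subset by blast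
  then show ?thesis using I h
  proof (induction I rule: finite_induct)
    case empty
    then show ?case by simp
  next
    case (insert b0 I)
    have b0: "b0 \<in> Basis" and IB: "I \<subseteq> Basis" using insert.prems by auto
    have card: "real (card (insert b0 I)) = real (card I) + 1" using insert.hyps by simp
    define p where "p = x + (\<Sum>b\<in>I. (h \<bullet> b) *\<^sub>R b)"
    define c where "c = h \<bullet> b0"
    have c: "\<bar>c\<bar> \<le> norm h" unfolding c_def using Basis_le_norm b0 by blast
    have close: "dist (p + s *\<^sub>R b0) x < \<delta>" if "s \<in> closed_segment 0 c" for s
    proof -
      have s: "\<bar>s\<bar> \<le> \<bar>c\<bar>" using that by (auto simp: closed_segment_eq_real_ivl split: if_splits)
      have "dist (p + s *\<^sub>R b0) x = norm ((\<Sum>b\<in>I. (h \<bullet> b) *\<^sub>R b) + s *\<^sub>R b0)"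
        by (simp add: p_def dist_norm)
      also have "\<dots> \<le> norm (\<Sum>b\<in>I. (h \<bullet> b) *\<^sub>R b) + norm (s *\<^sub>R b0)"
        by (rule norm_triangle_ineq)
      also have "\<dots> \<le> (real (card I) + 1) * norm h"
        using norm_sum_Basis_subset_le[OF IB, of h] s c b0 by (simp add: algebra_simps)
      also have "\<dots> < \<delta>" using insert.prems(2) card by simp
      finally show ?thesis .
    qed
    have step: "\<bar>g (p + c *\<^sub>R b0) - g (p + 0 *\<^sub>R b0) - c * D b0 x\<bar> \<le> e * \<bar>c\<bar>"
    proof (rule real_increment_linear_bound[where f = "\<lambda>s. g (p + s *\<^sub>R b0)"])
      fix s assume s: "s \<in> closed_segment 0 c"
      have y: "p + s *\<^sub>R b0 \<in> U" using near[OF close[OF s]] by blast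
      show "((\<lambda>s. g (p + s *\<^sub>R b0)) has_real_derivative D b0 (p + s *\<^sub>R b0)) (at s)"
        by (rule has_real_derivative_along_line) (rule der[OF b0 y])
      show "\<bar>D b0 (p + s *\<^sub>R b0) - D b0 x\<bar> \<le> e"
        using near[OF close[OF s]] b0 by simp
    qed
    have "real (card I) * norm h \<le> real (card (insert b0 I)) * norm h"
      using card by (simp add: mult_right_mono)
    then have "real (card I) * norm h < \<delta>" using insert.prems(2) by linarith
    then have IH: "\<bar>g p - g x - (\<Sum>b\<in>I. (h \<bullet> b) * D b x)\<bar> \<le> real (card I) * e * norm h"
      using insert.IH IB by (simp add: p_def)
    have "x + (\<Sum>b\<in>insert b0 I. (h \<bullet> b) *\<^sub>R b) = p + c *\<^sub>R b0"
      using insert.hyps by (simp add: p_def c_def algebra_simps)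
    moreover have "(\<Sum>b\<in>insert b0 I. (h \<bullet> b) * D b x) = c * D b0 x + (\<Sum>b\<in>I. (h \<bullet> b) * D b x)"
      using insert.hyps by (simp add: c_def)
    moreover have "e * \<bar>c\<bar> \<le> e * norm h" using c e by (simp add: mult_left_mono)
    moreover have "real (card (insert b0 I)) * e * norm h = e * norm h + real (card I) * e * norm h"
      using card by (simp add: algebra_simps)
    ultimately show ?case
      using step IH by (simp only: scaleR_zero_left add_0_right)
  qed
qed

lemma has_derivative_of_continuous_partials:
  fixes g :: "'a::euclidean_space \<Rightarrow> real"
  assumes U: "open U" "x \<in> U"
    and der: "\<And>b y. b \<in> Basis \<Longrightarrow> y \<in> U \<Longrightarrow> ((\<lambda>s. g (y + s *\<^sub>R b)) has_real_derivative D b y) (at 0)"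
    and cont: "\<And>b. b \<in> Basis \<Longrightarrow> continuous_on U (D b)"
  shows "(g has_derivative (\<lambda>h. \<Sum>b\<in>Basis. (h \<bullet> b) * D b x)) (at x)"
  unfolding has_derivative_at_alt
proof (intro conjI allI impI)
  show "bounded_linear (\<lambda>h. \<Sum>b\<in>Basis. (h \<bullet> b) * D b x)"
    by (intro bounded_linear_sum bounded_linear_compose[OF bounded_linear_mult_left bounded_linear_inner_left])
next
  fix e :: real assume e: "e > 0"
  define n where "n = real DIM('a)"
  have n: "n \<ge> 1" unfolding n_def using DIM_positive by (simp add: Suc_le_eq)
  have "\<forall>\<^sub>F y in at x. y \<in> U \<and> (\<forall>b\<in>Basis. \<bar>D b y - D b x\<bar> < e / n)"
  proof (intro eventually_conj eventually_ball_finite ballI finite_Basis)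
    show "\<forall>\<^sub>F y in at x. y \<in> U" using U eventually_at_topological by blast
  next
    fix b :: 'a assume b: "b \<in> Basis"
    have "((D b) \<longlongrightarrow> D b x) (at x)"
      using cont[OF b] U continuous_on_eq_continuous_at continuous_at by blast
    from tendstoD[OF this] show "\<forall>\<^sub>F y in at x. \<bar>D b y - D b x\<bar> < e / n"
      using e n by (simp add: dist_real_def)
  qed
  then obtain \<delta> where \<delta>: "\<delta> > 0"
    and near: "\<And>y. y \<noteq> x \<Longrightarrow> dist y x < \<delta> \<Longrightarrow> y \<in> U \<and> (\<forall>b\<in>Basis. \<bar>D b y - D b x\<bar> < e / n)"
    unfolding eventually_at by blast
  have near': "y \<in> U \<and> (\<forall>b\<in>Basis. \<bar>D b y - D b x\<bar> \<le> e / n)" if "dist y x < \<delta>" for y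
    using near[of y] that U e n by (cases "y = x") (auto simp: less_imp_le)
  show "\<exists>d>0. \<forall>y. norm (y - x) < d \<longrightarrow>
      norm (g y - g x - (\<Sum>b\<in>Basis. ((y - x) \<bullet> b) * D b x)) \<le> e * norm (y - x)"
  proof (intro exI[of _ "\<delta> / n"] conjI allI impI)
    show "\<delta> / n > 0" using \<delta> n by simp
    fix y assume "norm (y - x) < \<delta> / n"
    then have "real (card (Basis :: 'a set)) * norm (y - x) < \<delta>" using n by (simp add: n_def field_simps)
    from coordinatewise_increment_bound[OF der near' _ order_refl this]
    show "norm (g y - g x - (\<Sum>b\<in>Basis. ((y - x) \<bullet> b) * D b x)) \<le> e * norm (y - x)"
      using e n by (simp add: euclidean_representation n_def)
  qed
qed

lemma smooth_on_has_derivative: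
  fixes f :: "'a::euclidean_space \<Rightarrow> real"
  assumes sm: "smooth_on U f" and U: "open U" "x \<in> U" and vs: "set vs \<subseteq> Basis"
  shows "(iter_pd vs f has_derivative (\<lambda>h. \<Sum>b\<in>Basis. (h \<bullet> b) * iter_pd (b # vs) f x)) (at x)"
proof (rule has_derivative_of_continuous_partials[OF U])
  fix b y :: 'a assume "b \<in> Basis" "y \<in> U"
  then show "((\<lambda>s. iter_pd vs f (y + s *\<^sub>R b)) has_real_derivative iter_pd (b # vs) f y) (at 0)"
    using smooth_on_has_real_derivative_along_line[OF sm vs, of b y 0] by simp
next
  fix b :: 'a assume "b \<in> Basis"
  then show "continuous_on U (iter_pd (b # vs) f)"
    using smooth_on_continuous_on[OF sm, of "b # vs"] vs by simp
qed

lemma abs_sum_Basis_inner_mult_le: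
  fixes h :: "'b::euclidean_space"
  assumes "\<And>b. b \<in> Basis \<Longrightarrow> \<bar>X b\<bar> \<le> B"
  shows "\<bar>\<Sum>b\<in>Basis. (h \<bullet> b) * X b\<bar> \<le> real DIM('b) * B * norm h"
proof -
  have "\<bar>\<Sum>b\<in>Basis. (h \<bullet> b) * X b\<bar> \<le> (\<Sum>b\<in>Basis. \<bar>(h \<bullet> b) * X b\<bar>)" by (rule sum_abs)
  also have "\<dots> \<le> (\<Sum>b\<in>(Basis::'b set). norm h * B)"
  proof (rule sum_mono)
    fix b :: 'b assume b: "b \<in> Basis"
    have "\<bar>(h \<bullet> b) * X b\<bar> = \<bar>h \<bullet> b\<bar> * \<bar>X b\<bar>" by (simp add: abs_mult)
    also have "\<dots> \<le> norm h * B"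
      using Basis_le_norm[OF b, of h] assms[OF b] by (intro mult_mono) auto
    finally show "\<bar>(h \<bullet> b) * X b\<bar> \<le> norm h * B" .
  qed
  also have "\<dots> = real DIM('b) * B * norm h" by simp
  finally show ?thesis .
qed

lemma smooth_on_lipschitz_on_cball:
  fixes P :: "'a::euclidean_space \<Rightarrow> real"
  assumes sm: "smooth_on UNIV P"
    and gP: "\<And>w b. norm w \<le> \<rho>1 \<Longrightarrow> b \<in> Basis \<Longrightarrow> \<bar>iter_pd [b] P w\<bar> \<le> C1 * norm w ^ j"
    and C1: "C1 \<ge> 0" and R: "R \<le> \<rho>1"
    and u: "norm u \<le> R" and v: "norm v \<le> R"
  shows "\<bar>P u - P v\<bar> \<le> real DIM('a) * (C1 * R ^ j) * norm (u - v)"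
proof -
  have "norm (P u - P v) \<le> real DIM('a) * (C1 * R ^ j) * norm (u - v)"
  proof (rule differentiable_bound[of "cball 0 R" P "\<lambda>w h. \<Sum>b\<in>Basis. (h \<bullet> b) * iter_pd [b] P w"])
    fix w :: 'a assume "w \<in> cball 0 R"
    show "(P has_derivative (\<lambda>h. \<Sum>b\<in>Basis. (h \<bullet> b) * iter_pd [b] P w)) (at w within cball 0 R)"
    proof -
      have d: "(iter_pd [] P has_derivative (\<lambda>h. \<Sum>b\<in>Basis. (h \<bullet> b) * iter_pd [b] P w)) (at w)"
        by (rule smooth_on_has_derivative[OF sm open_UNIV UNIV_I]) simp
      then have "(P has_derivative (\<lambda>h. \<Sum>b\<in>Basis. (h \<bullet> b) * iter_pd [b] P w)) (at w)"
        unfolding iter_pd.simps(1) .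
      then show ?thesis by (rule has_derivative_at_withinI)
    qed
  next
    fix w :: 'a assume w: "w \<in> cball 0 R"
    show "onorm (\<lambda>h. \<Sum>b\<in>Basis. (h \<bullet> b) * iter_pd [b] P w) \<le> real DIM('a) * (C1 * R ^ j)"
    proof (rule onorm_le)
      fix h :: 'a
      have "\<bar>iter_pd [b] P w\<bar> \<le> C1 * R ^ j" if b: "b \<in> Basis" for b
      proof -
        have "norm w \<le> \<rho>1" using w R by simp
        then have "\<bar>iter_pd [b] P w\<bar> \<le> C1 * norm w ^ j" using gP[OF _ b] by blast
        also have "\<dots> \<le> C1 * R ^ j" using w C1 by (intro mult_left_mono power_mono) auto
        finally show ?thesis .
      qed
      then have "\<bar>\<Sum>b\<in>Basis. (h \<bullet> b) * iter_pd [b] P w\<bar> \<le> real DIM('a) * (C1 * R ^ j) * norm h"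
        by (rule abs_sum_Basis_inner_mult_le)
      then show "norm (\<Sum>b\<in>Basis. (h \<bullet> b) * iter_pd [b] P w) \<le> real DIM('a) * (C1 * R ^ j) * norm h"
        unfolding real_norm_def .
    qed
  qed (use u v in auto)
  then show ?thesis by simp
qed

lemma smooth_on_partial_lipschitz_in_space:
  fixes Sf :: "'a::euclidean_space \<times> 'b::euclidean_space \<Rightarrow> real"
  assumes sm: "smooth_on (T \<times> W) Sf" and T: "open T" and W: "open W"
    and s: "s \<in> T" and ball: "cball 0 \<rho>0 \<subseteq> W" and e: "e \<in> Basis"
    and M: "\<And>b z. b \<in> Basis \<Longrightarrow> z \<in> cball 0 \<rho>0 \<Longrightarrow> \<bar>iter_pd [b, e] Sf (s, z)\<bar> \<le> M"
    and z: "z \<in> cball 0 \<rho>0"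
  shows "\<bar>iter_pd [e] Sf (s, z) - iter_pd [e] Sf (s, 0)\<bar> \<le> real DIM('a \<times> 'b) * M * norm z"
proof -
  have op: "open (T \<times> W)" using T W by (rule open_Times)
  let ?g = "\<lambda>z. iter_pd [e] Sf (s, z)"
  have "norm (?g z - ?g 0) \<le> real DIM('a \<times> 'b) * M * norm (z - 0)"
  proof (rule differentiable_bound[of "cball 0 \<rho>0" ?g "\<lambda>w h. \<Sum>b\<in>Basis. ((0, h) \<bullet> b) * iter_pd [b, e] Sf (s, w)"])
    fix w :: 'b assume w: "w \<in> cball 0 \<rho>0"
    have mem: "(s, w) \<in> T \<times> W" using s w ball by auto
    have d1: "((\<lambda>z. (s, z)) has_derivative (\<lambda>h. (0, h))) (at w)"
      by (auto intro!: derivative_eq_intros)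
    have d2: "(iter_pd [e] Sf has_derivative (\<lambda>h. \<Sum>b\<in>Basis. (h \<bullet> b) * iter_pd [b, e] Sf (s, w))) (at (s, w))"
    proof -
      have "set [e] \<subseteq> Basis" using e by simp
      then show ?thesis by (rule smooth_on_has_derivative[OF sm op mem])
    qed
    show "(?g has_derivative (\<lambda>h. \<Sum>b\<in>Basis. ((0, h) \<bullet> b) * iter_pd [b, e] Sf (s, w))) (at w within cball 0 \<rho>0)"
      by (rule has_derivative_at_withinI[OF has_derivative_compose[OF d1 d2]])
  next
    fix w :: 'b assume w: "w \<in> cball 0 \<rho>0"
    show "onorm (\<lambda>h. \<Sum>b\<in>Basis. ((0, h) \<bullet> b) * iter_pd [b, e] Sf (s, w)) \<le> real DIM('a \<times> 'b) * M"
    proof (rule onorm_le)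
      fix h :: 'b
      have "\<bar>\<Sum>b\<in>Basis. ((0::'a, h) \<bullet> b) * iter_pd [b, e] Sf (s, w)\<bar>
           \<le> real DIM('a \<times> 'b) * M * norm (0::'a, h)"
        by (rule abs_sum_Basis_inner_mult_le) (rule M, assumption, rule w)
      moreover have nh: "norm (0::'a, h) = norm h" by (simp add: norm_Pair)
      ultimately show "norm (\<Sum>b\<in>Basis. ((0, h) \<bullet> b) * iter_pd [b, e] Sf (s, w)) \<le> real DIM('a \<times> 'b) * M * norm h"
        unfolding real_norm_def by simp
    qed
  qed (use z in \<open>auto intro: order_trans[OF norm_ge_zero]\<close>)
  then show ?thesis by simp
qed

section \<open>The critical point of p0\<close>

lemma dyadic_values_difference:
  fixes c :: "nat \<Rightarrow> real"
  shows "(\<Sum>m\<le>Suc d. c m * (1/2^i)^m) - 2^Suc d * (\<Sum>m\<le>Suc d. c m * (1/2^Suc i)^m)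
       = (\<Sum>m\<le>d. c m * (1 - 2^Suc d / 2^m) * (1/2^i)^m)"
proof -
  have "(\<Sum>m\<le>Suc d. c m * (1/2^i)^m) - 2^Suc d * (\<Sum>m\<le>Suc d. c m * (1/2^Suc i)^m)
      = (\<Sum>m\<le>Suc d. c m * (1/2^i)^m - 2^Suc d * (c m * (1/2^Suc i)^m))"
    by (simp only: sum_subtractf sum_distrib_left)
  also have "\<dots> = (\<Sum>m\<le>Suc d. c m * (1 - 2^Suc d / 2^m) * (1/2^i)^m)"
    by (rule sum.cong) (auto simp: power_divide power_mult_distrib field_simps power_add[symmetric])
  finally show ?thesis by simp
qed

text \<open>Induction on \<open>d\<close>: subtracting \<open>2\<^sup>d\<^sup>+\<^sup>1\<close> times the values at halved arguments removes
  the top coefficient.\<close>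
lemma poly_coeffs_bounded_by_dyadic_values:
  "\<exists>B>0. \<forall>(c::nat\<Rightarrow>real) M. (\<forall>i\<le>d. \<bar>\<Sum>m\<le>d. c m * (1/2^i)^m\<bar> \<le> M) \<longrightarrow> (\<forall>j\<le>d. \<bar>c j\<bar> \<le> B * M)"
proof (induction d)
  case 0
  show ?case by (intro exI[of _ 1]) auto
next
  case (Suc d)
  then obtain B where B: "B > 0"
    and IH: "\<And>(c::nat\<Rightarrow>real) M. (\<forall>i\<le>d. \<bar>\<Sum>m\<le>d. c m * (1/2^i)^m\<bar> \<le> M) \<Longrightarrow> (\<forall>j\<le>d. \<bar>c j\<bar> \<le> B * M)"
    by blast
  define A where "A = B * (1 + 2^Suc d)"
  have A: "A > 0" using B by (simp add: A_def add_pos_pos)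
  show ?case
  proof (intro exI[of _ "1 + real (Suc d) * A"] conjI allI impI)
    show "0 < 1 + real (Suc d) * A" using A by (simp add: add_pos_nonneg)
  next
    fix c :: "nat \<Rightarrow> real" and M j
    assume H: "\<forall>i\<le>Suc d. \<bar>\<Sum>m\<le>Suc d. c m * (1/2^i)^m\<bar> \<le> M"
      and j: "j \<le> Suc d"
    have M0: "M \<ge> 0" using H[rule_format, of 0] by linarith
    have "\<bar>\<Sum>m\<le>d. c m * (1 - 2^Suc d / 2^m) * (1/2^i)^m\<bar> \<le> (1 + 2^Suc d) * M" if i: "i \<le> d" for i
    proof -
      have combine: "\<bar>X - k * Y\<bar> \<le> (1 + k) * M" if "\<bar>X\<bar> \<le> M" "\<bar>Y\<bar> \<le> M" "k \<ge> 0" for X Y k :: real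
        using that abs_triangle_ineq4[of X "k * Y"] mult_left_mono[OF that(2,3)]
        by (simp add: abs_mult algebra_simps)
      have "\<bar>\<Sum>m\<le>Suc d. c m * (1/2^i)^m\<bar> \<le> M"
        and "\<bar>\<Sum>m\<le>Suc d. c m * (1/2^Suc i)^m\<bar> \<le> M"
        using H i by (auto simp del: power_Suc sum.atMost_Suc)
      then show ?thesis
        unfolding dyadic_values_difference[symmetric] by (rule combine) simp
    qed
    then have reduced: "\<bar>c m * (1 - 2^Suc d / 2^m)\<bar> \<le> A * M" if "m \<le> d" for m
      using IH[of "\<lambda>m. c m * (1 - 2^Suc d / 2^m)"] that by (simp add: A_def mult.assoc)
    have low: "\<bar>c m\<bar> \<le> A * M" if m: "m \<le> d" for m
    proof -
      have "(2::real)^m * 2 \<le> 2^Suc d" using m by (simp add: power_increasing)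
      then have "2 \<le> (2::real)^Suc d / 2^m" by (simp add: field_simps)
      then have "1 \<le> \<bar>1 - (2::real)^Suc d / 2^m\<bar>" by linarith
      then have "\<bar>c m\<bar> \<le> \<bar>c m\<bar> * \<bar>1 - (2::real)^Suc d / 2^m\<bar>"
        by (simp add: mult_le_cancel_left1)
      also have "\<dots> \<le> A * M" using reduced[OF m] by (simp add: abs_mult)
      finally show ?thesis .
    qed
    show "\<bar>c j\<bar> \<le> (1 + real (Suc d) * A) * M"
    proof (cases "j \<le> d")
      case True
      then have "\<bar>c j\<bar> \<le> A * M" by (rule low)
      also have "\<dots> \<le> (1 + real (Suc d) * A) * M"
        using A M0 by (intro mult_right_mono) (auto simp: algebra_simps intro: order_trans[of _ "1 * A"])
      finally show ?thesis .
    next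
      case False
      then have jd: "j = Suc d" using j by simp
      have top: "\<bar>\<Sum>m\<le>Suc d. c m\<bar> \<le> M" using H[rule_format, of 0] by simp
      have "\<bar>\<Sum>m\<le>d. c m\<bar> \<le> (\<Sum>m\<le>d. A * M)"
        using low by (intro order_trans[OF sum_abs] sum_mono) auto
      moreover have "c (Suc d) = (\<Sum>m\<le>Suc d. c m) - (\<Sum>m\<le>d. c m)" by simp
      ultimately show ?thesis using top jd by (simp add: algebra_simps)
    qed
  qed
qed

lemma continuous_on_compact_abs_bound:
  fixes f :: "'a::topological_space \<Rightarrow> real"
  assumes "continuous_on S f" "compact Q" "Q \<subseteq> S"
  shows "\<exists>M. \<forall>q\<in>Q. \<bar>f q\<bar> \<le> M"
proof -
  have "bounded (f ` Q)"
    using assms by (intro compact_imp_bounded compact_continuous_image continuous_on_subset[OF assms(1)])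
  then show ?thesis unfolding bounded_iff by auto
qed

text \<open>On a small sphere, the homogeneous terms are the coefficients of a polynomial in the radial
  scaling factor whose values are bounded, by the expansion of \<open>P\<close>.\<close>
lemma homogeneous_terms_bounded_on_sphere:
  fixes P :: "'a::euclidean_space \<Rightarrow> real" and pp :: "nat \<Rightarrow> 'a \<Rightarrow> real"
  assumes cont: "continuous_on UNIV P"
    and hom: "\<forall>j\<in>{k..N}. homogeneous_deg j (pp j)"
    and expn: "\<forall>z. norm z < r \<longrightarrow> \<bar>P z - Ec - (\<Sum>j=k..N. pp j z)\<bar> \<le> C * norm z ^ (N + 1)"
    and \<rho>: "0 < \<rho>" "\<rho> \<le> 1" "\<rho> < r"
  shows "\<exists>B\<ge>0. \<forall>j\<in>{k..N}. \<forall>u. norm u = \<rho> \<longrightarrow> \<bar>pp j u\<bar> \<le> B"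
proof -
  obtain MP where MP: "\<And>v. norm v \<le> 1 \<Longrightarrow> \<bar>P v\<bar> \<le> MP"
    using continuous_on_compact_abs_bound[OF cont compact_cball, of 0 1] by (meson mem_cball_0 subset_UNIV)
  define M where "M = MP + \<bar>Ec\<bar> + \<bar>C\<bar>"
  have M0: "M \<ge> 0" using MP[of 0] by (simp add: M_def)
  obtain B where B: "B > 0"
    and coeffs: "\<And>(c::nat\<Rightarrow>real) M. (\<forall>i\<le>N. \<bar>\<Sum>m\<le>N. c m * (1/2^i)^m\<bar> \<le> M) \<Longrightarrow> (\<forall>j\<le>N. \<bar>c j\<bar> \<le> B * M)"
    using poly_coeffs_bounded_by_dyadic_values[of N] by blast
  have "\<bar>pp j u\<bar> \<le> B * M" if u: "norm u = \<rho>" and j: "j \<in> {k..N}" for u j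
  proof -
    define c where "c m = (if k \<le> m then pp m u else 0)" for m
    have "\<bar>\<Sum>m\<le>N. c m * \<sigma>^m\<bar> \<le> M" if \<sigma>: "0 < \<sigma>" "\<sigma> \<le> 1" for \<sigma> :: real
    proof -
      have "norm (\<sigma> *\<^sub>R u) \<le> \<rho>" using \<sigma> u \<rho> mult_right_mono[of \<sigma> 1 \<rho>] by simp
      then have small: "norm (\<sigma> *\<^sub>R u) \<le> 1" "norm (\<sigma> *\<^sub>R u) < r" using \<rho> by linarith+
      have "(\<Sum>m\<le>N. c m * \<sigma>^m) = (\<Sum>m\<le>N. if m \<in> {m. k \<le> m} then pp m u * \<sigma>^m else 0)"
        by (rule sum.cong) (auto simp: c_def)
      also have "\<dots> = (\<Sum>m\<in>{..N} \<inter> {m. k \<le> m}. pp m u * \<sigma>^m)"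
        by (rule sum.inter_restrict[symmetric]) simp
      also have "{..N} \<inter> {m. k \<le> m} = {k..N}" by auto
      also have "(\<Sum>m\<in>{k..N}. pp m u * \<sigma>^m) = (\<Sum>m=k..N. pp m (\<sigma> *\<^sub>R u))"
        using hom by (intro sum.cong) (auto simp: homogeneous_deg_def)
      finally have eq: "(\<Sum>m\<le>N. c m * \<sigma>^m) = (\<Sum>m=k..N. pp m (\<sigma> *\<^sub>R u))" .
      have "C * norm (\<sigma> *\<^sub>R u) ^ (N + 1) \<le> \<bar>C\<bar> * 1"
        using small by (intro mult_mono power_le_one) auto
      moreover have "\<bar>P (\<sigma> *\<^sub>R u) - Ec - (\<Sum>m=k..N. pp m (\<sigma> *\<^sub>R u))\<bar> \<le> C * norm (\<sigma> *\<^sub>R u) ^ (N + 1)"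
        using expn small by blast
      ultimately show ?thesis
        using MP[OF small(1)] unfolding eq M_def by linarith
    qed
    then have "\<forall>j\<le>N. \<bar>c j\<bar> \<le> B * M" by (intro coeffs) simp
    then show ?thesis using j by (auto simp: c_def)
  qed
  then show ?thesis using B M0 by (intro exI[of _ "B * M"]) auto
qed

lemma homogeneous_terms_bound:
  fixes P :: "'a::euclidean_space \<Rightarrow> real" and pp :: "nat \<Rightarrow> 'a \<Rightarrow> real"
  assumes cont: "continuous_on UNIV P" and k: "k \<ge> 1"
    and hom: "\<forall>j\<in>{k..N}. homogeneous_deg j (pp j)"
    and r: "r > 0" and expn: "\<forall>z. norm z < r \<longrightarrow> \<bar>P z - Ec - (\<Sum>j=k..N. pp j z)\<bar> \<le> C * norm z ^ (N + 1)"
  shows "\<exists>\<rho>>0. \<rho> \<le> 1 \<and> \<rho> < r \<and> (\<exists>Bp\<ge>0. \<forall>j\<in>{k..N}. \<forall>w. norm w \<le> \<rho> \<longrightarrow> \<bar>pp j w\<bar> \<le> Bp * norm w ^ j)"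
proof -
  define \<rho> where "\<rho> = min 1 (r / 2)"
  have \<rho>: "\<rho> > 0" "\<rho> \<le> 1" "\<rho> < r" using r by (auto simp: \<rho>_def)
  obtain B where B: "B \<ge> 0" and sphere: "\<And>j u. j \<in> {k..N} \<Longrightarrow> norm u = \<rho> \<Longrightarrow> \<bar>pp j u\<bar> \<le> B"
    using homogeneous_terms_bounded_on_sphere[OF cont hom expn \<rho>] by blast
  have hom': "pp j (s *\<^sub>R u) = s ^ j * pp j u" if "j \<in> {k..N}" for j s u
    using hom that unfolding homogeneous_deg_def by blast
  define Bp where "Bp = B / \<rho> ^ N"
  have "\<bar>pp j w\<bar> \<le> Bp * norm w ^ j" if j: "j \<in> {k..N}" and w: "norm w \<le> \<rho>" for j w
  proof (cases "w = 0")
    case True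
    then show ?thesis using hom'[OF j, of 0 w] j k by (simp add: power_0_left)
  next
    case False
    define u where "u = (\<rho> / norm w) *\<^sub>R w"
    have "norm u = \<rho>" using False \<rho> by (simp add: u_def)
    moreover have "w = (norm w / \<rho>) *\<^sub>R u" using False \<rho> by (simp add: u_def)
    ultimately have "\<bar>pp j w\<bar> = (norm w / \<rho>) ^ j * \<bar>pp j u\<bar>"
      using hom'[OF j] \<rho> by (metis abs_mult abs_of_nonneg divide_nonneg_nonneg norm_ge_zero
          less_imp_le zero_le_power)
    also have "\<dots> \<le> (norm w / \<rho>) ^ j * B"
      using sphere[OF j \<open>norm u = \<rho>\<close>] \<rho> by (intro mult_left_mono) auto
    also have "\<dots> = norm w ^ j * B / \<rho> ^ j" by (simp add: power_divide)
    also have "\<dots> \<le> norm w ^ j * B / \<rho> ^ N"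
      using B \<rho> j by (intro divide_left_mono power_decreasing) auto
    finally show ?thesis by (simp add: Bp_def mult.commute)
  qed
  moreover have "Bp \<ge> 0" using B \<rho> by (simp add: Bp_def)
  ultimately show ?thesis using \<rho> by blast
qed

lemma smooth_on_critical_point_partial:
  fixes P :: "'a::euclidean_space \<Rightarrow> real"
  assumes sm: "smooth_on UNIV P" and crit: "(P has_derivative (\<lambda>_. 0)) (at 0)" and b: "b \<in> Basis"
  shows "iter_pd [b] P 0 = 0"
proof -
  have "((\<lambda>s::real. s *\<^sub>R b) has_derivative (\<lambda>s. s *\<^sub>R b)) (at 0)"
    by (intro bounded_linear_imp_has_derivative bounded_linear_scaleR_left)
  then have "((\<lambda>s. P (s *\<^sub>R b)) has_derivative (\<lambda>_. 0) \<circ> (\<lambda>s. s *\<^sub>R b)) (at 0)"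
    using has_derivative_compose crit by fastforce
  moreover have "(*) (0::real) = (\<lambda>_. 0)" by auto
  ultimately have "((\<lambda>s. P (s *\<^sub>R b)) has_real_derivative 0) (at 0)"
    by (simp add: has_field_derivative_def o_def)
  moreover have "((\<lambda>s. iter_pd [] P (0 + s *\<^sub>R b)) has_real_derivative iter_pd [b] P (0 + 0 *\<^sub>R b)) (at 0)"
    by (rule smooth_on_has_real_derivative_along_line[OF sm _ b]) auto
  ultimately show ?thesis using DERIV_unique by fastforce
qed

lemma maclaurin_polynomial_abs_bound:
  fixes f :: "nat \<Rightarrow> real \<Rightarrow> real"
  assumes n: "n > 0" and s: "s > 0"
    and der: "\<And>m t. m < n \<Longrightarrow> 0 \<le> t \<Longrightarrow> t \<le> s \<Longrightarrow> (f m has_real_derivative f (Suc m) t) (at t)"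
    and bd: "\<And>t. 0 \<le> t \<Longrightarrow> t \<le> s \<Longrightarrow> \<bar>f n t\<bar> \<le> M"
  shows "\<bar>\<Sum>m<n. f m 0 / fact m * s^m\<bar> \<le> \<bar>f 0 s\<bar> + M * s^n"
proof -
  obtain t where t: "0 < t" "t < s"
    and taylor: "f 0 s = (\<Sum>m<n. f m 0 / fact m * s^m) + f n t / fact n * s^n"
    using Maclaurin[OF s n refl, of f] der by blast
  have "\<bar>f n t / fact n * s^n\<bar> = \<bar>f n t\<bar> * s^n / fact n"
    using s by (simp add: abs_mult)
  also have "\<dots> \<le> \<bar>f n t\<bar> * s^n"
    using divide_left_mono[of 1 "fact n" "\<bar>f n t\<bar> * s^n"] s by simp
  also have "\<dots> \<le> M * s^n" using bd t s by (intro mult_right_mono) auto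
  finally show ?thesis using taylor by linarith
qed

text \<open>The Taylor polynomial of \<open>s \<mapsto> P (w + s b)\<close> at \<open>s = 0\<close>, evaluated at \<open>s = |w|/2\<^sup>i\<close>, is
  \<open>O(|w|\<^sup>k)\<close>, hence so is each of its coefficients, in particular \<open>|w| \<cdot> \<partial>\<^sub>b P w\<close>.\<close>
lemma partials_bound_from_vanishing_order:
  fixes P :: "'a::euclidean_space \<Rightarrow> real"
  assumes sm: "smooth_on UNIV P" and crit: "(P has_derivative (\<lambda>_. 0)) (at 0)"
    and k: "k \<ge> 2" and \<rho>: "0 < \<rho>" "\<rho> \<le> 1"
    and Cq: "\<forall>v. norm v \<le> \<rho> \<longrightarrow> \<bar>P v - Ec\<bar> \<le> Cq * norm v ^ k"
  shows "\<exists>C\<ge>0. \<forall>w. norm w \<le> \<rho> / 2 \<longrightarrow> (\<forall>b\<in>Basis. \<bar>iter_pd [b] P w\<bar> \<le> C * norm w ^ (k - 1))"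
proof -
  have "continuous_on UNIV (\<lambda>v. \<Sum>b\<in>Basis. \<bar>iter_pd (replicate k b) P v\<bar>)"
    by (intro continuous_intros smooth_on_continuous_on[OF sm]) auto
  then obtain Mk where Mk_sum: "\<forall>v\<in>cball 0 1. \<bar>\<Sum>b\<in>Basis. \<bar>iter_pd (replicate k b) P v\<bar>\<bar> \<le> Mk"
    using continuous_on_compact_abs_bound[OF _ compact_cball] by blast
  have Mk: "\<bar>iter_pd (replicate k b) P v\<bar> \<le> Mk" if "b \<in> Basis" "norm v \<le> 1" for b v
  proof -
    have "\<bar>iter_pd (replicate k b) P v\<bar> \<le> (\<Sum>b\<in>Basis. \<bar>iter_pd (replicate k b) P v\<bar>)"
      by (rule member_le_sum) (use that in auto)
    also have "\<dots> \<le> Mk" using Mk_sum that by (simp add: mem_cball_0)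
    finally show ?thesis .
  qed
  have Mk0: "Mk \<ge> 0" using Mk[of _ 0] SOME_Basis by fastforce
  obtain B where B: "B > 0"
    and coeffs: "\<And>(c::nat\<Rightarrow>real) M. (\<forall>i\<le>k-1. \<bar>\<Sum>m\<le>k-1. c m * (1/2^i)^m\<bar> \<le> M) \<Longrightarrow> (\<forall>j\<le>k-1. \<bar>c j\<bar> \<le> B * M)"
    using poly_coeffs_bounded_by_dyadic_values[of "k-1"] by blast
  define C where "C = B * (\<bar>Cq\<bar> * 2^k + Mk)"
  have C0: "C \<ge> 0" using B Mk0 by (simp add: C_def)
  have "\<bar>iter_pd [b] P w\<bar> \<le> C * norm w ^ (k - 1)" if w: "norm w \<le> \<rho> / 2" and b: "b \<in> Basis" for w b
  proof (cases "w = 0")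
    case True
    then show ?thesis using smooth_on_critical_point_partial[OF sm crit b] C0 by simp
  next
    case False
    define nw where "nw = norm w"
    have nw: "nw > 0" "2 * nw \<le> \<rho>" using False w by (auto simp: nw_def)
    define f where "f m s = (if m = 0 then P (w + s *\<^sub>R b) - Ec else iter_pd (replicate m b) P (w + s *\<^sub>R b))" for m s
    have der: "(f m has_real_derivative f (Suc m) t) (at t)" for m t
      using smooth_on_has_real_derivative_along_line[OF sm _ b, of "replicate m b" w t] b
      by (cases "m = 0") (auto simp: f_def[abs_def] intro!: derivative_eq_intros)
    have near: "norm (w + s *\<^sub>R b) \<le> nw + s" if "s \<ge> 0" for s
      using norm_triangle_ineq[of w "s *\<^sub>R b"] b that by (simp add: nw_def)
    define c where "c m = f m 0 / fact m * nw ^ m" for m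
    have "\<bar>\<Sum>m\<le>k-1. c m * (1/2^i)^m\<bar> \<le> (\<bar>Cq\<bar> * 2^k + Mk) * nw ^ k" for i
    proof -
      define s :: real where "s = nw / 2^i"
      have s: "0 < s" "s \<le> nw" using nw by (auto simp: s_def field_simps)
      have "(\<Sum>m\<le>k-1. c m * (1/2^i)^m) = (\<Sum>m<k. f m 0 / fact m * s^m)"
        using k by (simp add: c_def s_def lessThan_Suc_atMost[symmetric] power_divide)
      moreover have "\<bar>\<Sum>m<k. f m 0 / fact m * s^m\<bar> \<le> \<bar>f 0 s\<bar> + Mk * s^k"
      proof (rule maclaurin_polynomial_abs_bound[where f = f, OF _ s(1)])
        show "(f m has_real_derivative f (Suc m) t) (at t)" for m t by (rule der)
        fix t assume "0 \<le> t" "t \<le> s"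
        then show "\<bar>f k t\<bar> \<le> Mk" using Mk[OF b] near[of t] nw s k \<rho> by (simp add: f_def)
      qed (use k in simp)
      moreover have "\<bar>f 0 s\<bar> \<le> \<bar>Cq\<bar> * (2 * nw) ^ k"
      proof -
        have "\<bar>f 0 s\<bar> \<le> Cq * norm (w + s *\<^sub>R b) ^ k" using Cq near[of s] nw s by (simp add: f_def)
        also have "\<dots> \<le> \<bar>Cq\<bar> * (2 * nw) ^ k"
          using near[of s] s by (intro mult_mono power_mono) auto
        finally show ?thesis .
      qed
      moreover have "Mk * s^k \<le> Mk * nw^k" using s Mk0 by (intro mult_left_mono power_mono) auto
      ultimately show ?thesis by (simp add: power_mult_distrib algebra_simps)
    qed
    then have "\<bar>c 1\<bar> \<le> C * nw ^ k" using coeffs k by (auto simp: C_def mult.assoc)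
    moreover have "c 1 = iter_pd [b] P w * nw" by (simp add: c_def f_def)
    ultimately have "\<bar>iter_pd [b] P w\<bar> * nw \<le> C * nw ^ (k - 1) * nw"
      using nw k by (simp add: abs_mult power_eq_if[of nw k] algebra_simps split: if_splits)
    then show ?thesis using nw by (simp add: nw_def)
  qed
  then show ?thesis using C0 by blast
qed

lemma expansion_remainder_and_partials_bound:
  fixes P :: "'a::euclidean_space \<Rightarrow> real" and pp :: "nat \<Rightarrow> 'a \<Rightarrow> real"
  assumes sm: "smooth_on UNIV P" and crit: "(P has_derivative (\<lambda>_. 0)) (at 0)"
    and k: "k \<ge> 2" and kN: "k \<le> N"
    and hom: "\<forall>j\<in>{k..N}. homogeneous_deg j (pp j)"
    and expansion: "\<exists>r>0. \<exists>C. \<forall>z. norm z < r \<longrightarrow> \<bar>P z - Ec - (\<Sum>j=k..N. pp j z)\<bar> \<le> C * norm z ^ (N + 1)"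
  shows "\<exists>\<rho>>0. \<rho> \<le> 1 \<and> (\<exists>C\<ge>0. \<forall>w. norm w \<le> \<rho> \<longrightarrow>
            \<bar>P w - Ec - pp k w\<bar> \<le> C * norm w ^ (k + 1) \<and> (\<forall>b\<in>Basis. \<bar>iter_pd [b] P w\<bar> \<le> C * norm w ^ (k - 1)))"
proof -
  obtain r C where r: "r > 0"
    and expn: "\<forall>z. norm z < r \<longrightarrow> \<bar>P z - Ec - (\<Sum>j=k..N. pp j z)\<bar> \<le> C * norm z ^ (N + 1)"
    using expansion by blast
  have cont: "continuous_on UNIV P" using smooth_on_continuous_on[OF sm, of "[]"] by simp
  obtain \<rho> Bp where \<rho>: "\<rho> > 0" "\<rho> \<le> 1" "\<rho> < r" and Bp: "Bp \<ge> 0"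
    and pp_bound: "\<And>j w. j \<in> {k..N} \<Longrightarrow> norm w \<le> \<rho> \<Longrightarrow> \<bar>pp j w\<bar> \<le> Bp * norm w ^ j"
    using homogeneous_terms_bound[OF cont _ hom r expn] k by auto
  define C1 where "C1 = max C 0 + real N * Bp"
  have C1: "C1 \<ge> 0" using Bp by (simp add: C1_def)
  have remainder: "\<bar>P w - Ec - pp k w\<bar> \<le> C1 * norm w ^ (k + 1)" if w: "norm w \<le> \<rho>" for w
  proof -
    have w1: "norm w \<le> 1" using w \<rho> by linarith
    have "\<bar>P w - Ec - (\<Sum>j=k..N. pp j w)\<bar> \<le> C * norm w ^ (N + 1)"
      using expn w \<rho> by simp
    also have "\<dots> \<le> max C 0 * norm w ^ (N + 1)" by (intro mult_right_mono) auto
    also have "\<dots> \<le> max C 0 * norm w ^ (k + 1)"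
      by (intro mult_left_mono power_decreasing) (use w1 kN in auto)
    finally have main: "\<bar>P w - Ec - (\<Sum>j=k..N. pp j w)\<bar> \<le> max C 0 * norm w ^ (k + 1)" .
    have "\<bar>\<Sum>j=Suc k..N. pp j w\<bar> \<le> (\<Sum>j=Suc k..N. Bp * norm w ^ (k + 1))"
    proof (rule order_trans[OF sum_abs sum_mono])
      fix j assume j: "j \<in> {Suc k..N}"
      have "\<bar>pp j w\<bar> \<le> Bp * norm w ^ j" using pp_bound[OF _ w] j by auto
      also have "\<dots> \<le> Bp * norm w ^ (k + 1)"
        by (intro mult_left_mono power_decreasing) (use w1 j Bp in auto)
      finally show "\<bar>pp j w\<bar> \<le> Bp * norm w ^ (k + 1)" .
    qed
    also have "\<dots> = real (N - k) * (Bp * norm w ^ (k + 1))" by simp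
    also have "\<dots> \<le> real N * Bp * norm w ^ (k + 1)"
      using Bp by (simp add: mult_right_mono mult.assoc)
    finally have tail: "\<bar>\<Sum>j=Suc k..N. pp j w\<bar> \<le> real N * Bp * norm w ^ (k + 1)" .
    have "(\<Sum>j=k..N. pp j w) = pp k w + (\<Sum>j=Suc k..N. pp j w)"
      using kN by (simp add: sum.atLeast_Suc_atMost)
    then show ?thesis using main tail unfolding C1_def by (simp add: algebra_simps)
  qed
  have "\<forall>v. norm v \<le> \<rho> \<longrightarrow> \<bar>P v - Ec\<bar> \<le> (C1 + Bp) * norm v ^ k"
  proof (intro allI impI)
    fix v :: 'a assume v: "norm v \<le> \<rho>"
    have "\<bar>P v - Ec\<bar> \<le> \<bar>P v - Ec - pp k v\<bar> + \<bar>pp k v\<bar>" by linarith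
    moreover have "\<bar>pp k v\<bar> \<le> Bp * norm v ^ k" using pp_bound[OF _ v, of k] kN by simp
    moreover have "C1 * norm v ^ (k + 1) \<le> C1 * norm v ^ k"
      using v \<rho> C1 by (intro mult_left_mono power_decreasing) auto
    ultimately show "\<bar>P v - Ec\<bar> \<le> (C1 + Bp) * norm v ^ k"
      using remainder[OF v] unfolding distrib_right by linarith
  qed
  from partials_bound_from_vanishing_order[OF sm crit k \<rho>(1,2) this]
  obtain C2 where C2: "C2 \<ge> 0"
    and partials: "\<forall>w. norm w \<le> \<rho> / 2 \<longrightarrow> (\<forall>b\<in>Basis. \<bar>iter_pd [b] P w\<bar> \<le> C2 * norm w ^ (k - 1))"
    by blast
  have "\<bar>P w - Ec - pp k w\<bar> \<le> (C1 + C2) * norm w ^ (k + 1)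
      \<and> (\<forall>b\<in>Basis. \<bar>iter_pd [b] P w\<bar> \<le> (C1 + C2) * norm w ^ (k - 1))" if w: "norm w \<le> \<rho> / 2" for w
  proof (intro conjI ballI)
    have "\<bar>P w - Ec - pp k w\<bar> \<le> C1 * norm w ^ (k + 1)" using remainder w \<rho> by simp
    also have "\<dots> \<le> (C1 + C2) * norm w ^ (k + 1)" using C2 by (simp add: mult_right_mono)
    finally show "\<bar>P w - Ec - pp k w\<bar> \<le> (C1 + C2) * norm w ^ (k + 1)" .
    fix b :: 'a assume "b \<in> Basis"
    then have "\<bar>iter_pd [b] P w\<bar> \<le> C2 * norm w ^ (k - 1)" using partials w by simp
    also have "\<dots> \<le> (C1 + C2) * norm w ^ (k - 1)" using C1 by (simp add: mult_right_mono)
    finally show "\<bar>iter_pd [b] P w\<bar> \<le> (C1 + C2) * norm w ^ (k - 1)" .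
  qed
  moreover have "\<rho> / 2 > 0" "\<rho> / 2 \<le> 1" "C1 + C2 \<ge> 0" using \<rho> C1 C2 by auto
  ultimately show ?thesis by blast
qed

section \<open>Gronwall estimates along the Hamiltonian flow\<close>

lemma has_real_derivative_inner_self:
  fixes \<gamma> :: "real \<Rightarrow> 'v::real_inner"
  assumes "(\<gamma> has_vector_derivative v) (at \<tau>)"
  shows "((\<lambda>t. \<gamma> t \<bullet> \<gamma> t) has_real_derivative 2 * (\<gamma> \<tau> \<bullet> v)) (at \<tau>)"
proof -
  have d: "(\<gamma> has_derivative (\<lambda>h. h *\<^sub>R v)) (at \<tau>)"
    using assms by (simp add: has_vector_derivative_def)
  have "((\<lambda>t. \<gamma> t \<bullet> \<gamma> t) has_derivative (\<lambda>h. \<gamma> \<tau> \<bullet> (h *\<^sub>R v) + (h *\<^sub>R v) \<bullet> \<gamma> \<tau>)) (at \<tau>)"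
    by (rule has_derivative_inner[OF d d])
  moreover have "(\<lambda>h. \<gamma> \<tau> \<bullet> (h *\<^sub>R v) + (h *\<^sub>R v) \<bullet> \<gamma> \<tau>) = (*) (2 * (\<gamma> \<tau> \<bullet> v))"
    by (rule ext) (simp add: inner_commute algebra_simps)
  ultimately show ?thesis by (simp add: has_field_derivative_def)
qed

text \<open>Gronwall: \<open>e\<^sup>-\<^sup>2\<^sup>L\<^sup>t |\<gamma> t|\<^sup>2\<close> is non-increasing as long
  as \<open>|\<gamma>| < \<rho>\<close>.\<close>
lemma gronwall_norm_bound_while_small:
  fixes \<gamma> \<gamma>' :: "real \<Rightarrow> 'v::real_inner"
  assumes t0: "t0 \<ge> 0"
    and der: "\<And>\<tau>. \<tau> \<in> {0..t0} \<Longrightarrow> (\<gamma> has_vector_derivative \<gamma>' \<tau>) (at \<tau>)"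
    and bd: "\<And>\<tau>. \<tau> \<in> {0..t0} \<Longrightarrow> norm (\<gamma> \<tau>) < \<rho> \<Longrightarrow> norm (\<gamma>' \<tau>) \<le> L * norm (\<gamma> \<tau>)"
    and small: "\<And>\<tau>. 0 < \<tau> \<Longrightarrow> \<tau> < t0 \<Longrightarrow> norm (\<gamma> \<tau>) < \<rho>"
  shows "norm (\<gamma> t0) \<le> exp (L * t0) * norm (\<gamma> 0)"
proof (cases "t0 = 0")
  case True
  then show ?thesis by simp
next
  case False
  then have t0p: "0 < t0" using t0 by auto
  define h where "h t = exp (- (2 * L) * t) * (\<gamma> t \<bullet> \<gamma> t)" for t
  define h' where "h' t = exp (- (2 * L) * t) * (2 * (\<gamma> t \<bullet> \<gamma>' t)) + exp (- (2 * L) * t) * (- (2 * L)) * (\<gamma> t \<bullet> \<gamma> t)" for t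
  have "(h has_real_derivative h' t) (at t)" if "t \<in> {0..t0}" for t
  proof -
    have "((\<lambda>t. exp (- (2 * L) * t)) has_real_derivative exp (- (2 * L) * t) * (- (2 * L))) (at t)"
      by (auto intro!: derivative_eq_intros)
    then show ?thesis unfolding h_def[abs_def] h'_def
      by (rule DERIV_mult'[OF _ has_real_derivative_inner_self[OF der[OF that]]])
  qed
  then obtain z where z: "0 < z" "z < t0" and mvt: "h t0 - h 0 = (t0 - 0) * h' z"
    using MVT2[OF t0p, of h h'] by auto
  have "\<gamma> z \<bullet> \<gamma>' z \<le> norm (\<gamma> z) * norm (\<gamma>' z)" by (rule norm_cauchy_schwarz)
  also have "\<dots> \<le> norm (\<gamma> z) * (L * norm (\<gamma> z))" using z by (intro mult_left_mono bd small) auto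
  finally have "\<gamma> z \<bullet> \<gamma>' z \<le> L * (\<gamma> z \<bullet> \<gamma> z)"
    by (simp add: power2_norm_eq_inner[symmetric] power2_eq_square algebra_simps)
  then have "h' z \<le> 0"
    by (simp add: h'_def mult_nonneg_nonpos algebra_simps flip: distrib_left)
  then have "t0 * h' z \<le> 0" using t0p by (simp add: mult_nonneg_nonpos)
  then have "h t0 \<le> h 0" using mvt by simp
  then have "(norm (\<gamma> t0))^2 \<le> exp (2 * L * t0) * (norm (\<gamma> 0))^2"
    by (simp add: h_def power2_norm_eq_inner exp_minus field_simps)
  also have "exp (2 * L * t0) = (exp (L * t0))^2"
    by (simp add: power2_eq_square exp_add[symmetric])
  finally have "(norm (\<gamma> t0))^2 \<le> (exp (L * t0) * norm (\<gamma> 0))^2"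
    by (simp add: power_mult_distrib)
  then show ?thesis by (rule power2_le_imp_le) simp
qed

text \<open>A first exit time from the ball of radius \<open>\<rho>\<close> would contradict the bound above.\<close>
lemma gronwall_norm_bound_forward:
  fixes \<gamma> \<gamma>' :: "real \<Rightarrow> 'v::real_inner"
  assumes s: "s \<ge> 0" and L: "L \<ge> 0"
    and der: "\<And>\<tau>. \<tau> \<in> {0..s} \<Longrightarrow> (\<gamma> has_vector_derivative \<gamma>' \<tau>) (at \<tau>)"
    and bd: "\<And>\<tau>. \<tau> \<in> {0..s} \<Longrightarrow> norm (\<gamma> \<tau>) < \<rho> \<Longrightarrow> norm (\<gamma>' \<tau>) \<le> L * norm (\<gamma> \<tau>)"
    and init: "norm (\<gamma> 0) * exp (L * s) < \<rho>"
  shows "\<forall>\<tau>\<in>{0..s}. norm (\<gamma> \<tau>) \<le> exp (L * \<tau>) * norm (\<gamma> 0)"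
proof -
  have bound: "norm (\<gamma> t) \<le> exp (L * t) * norm (\<gamma> 0)"
    if t: "t \<in> {0..s}" and small: "\<And>\<tau>. 0 < \<tau> \<Longrightarrow> \<tau> < t \<Longrightarrow> norm (\<gamma> \<tau>) < \<rho>" for t
    by (rule gronwall_norm_bound_while_small[where \<rho> = \<rho> and \<gamma>' = \<gamma>']) (use t der bd small in auto)
  define A where "A = {t \<in> {0..s}. \<rho> \<le> norm (\<gamma> t)}"
  have "A = {}"
  proof (rule ccontr)
    assume ne: "A \<noteq> {}"
    have "continuous_on {0..s} \<gamma>"
      using der by (meson continuous_at_imp_continuous_on has_vector_derivative_continuous)
    then have "closed A"
      unfolding A_def by (intro continuous_on_closed_Collect_le continuous_intros) auto
    moreover have bdd: "bdd_below A" unfolding A_def by (rule bdd_belowI[of _ 0]) auto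
    ultimately have first: "Inf A \<in> A" using closed_contains_Inf[OF ne] by blast
    have "norm (\<gamma> \<tau>) < \<rho>" if "0 < \<tau>" "\<tau> < Inf A" for \<tau>
      using cInf_lower[OF _ bdd, of \<tau>] that first by (force simp: A_def)
    then have "norm (\<gamma> (Inf A)) \<le> exp (L * Inf A) * norm (\<gamma> 0)"
      using first by (intro bound) (auto simp: A_def)
    also have "\<dots> \<le> exp (L * s) * norm (\<gamma> 0)"
      using first L by (intro mult_right_mono) (auto simp: A_def intro: mult_left_mono)
    also have "\<dots> < \<rho>" using init by (simp add: mult.commute)
    finally show False using first by (simp add: A_def)
  qed
  then have "norm (\<gamma> \<tau>) < \<rho>" if "\<tau> \<in> {0..s}" for \<tau>
    using that by (force simp: A_def)
  then show ?thesis
    by (auto intro!: bound)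
qed

lemma gronwall_norm_bound:
  fixes \<gamma> \<gamma>' :: "real \<Rightarrow> 'v::real_inner"
  assumes der: "\<And>\<tau>. \<tau> \<in> closed_segment 0 s \<Longrightarrow> (\<gamma> has_vector_derivative \<gamma>' \<tau>) (at \<tau>)"
    and L: "L \<ge> 0"
    and bd: "\<And>\<tau>. \<tau> \<in> closed_segment 0 s \<Longrightarrow> norm (\<gamma> \<tau>) < \<rho> \<Longrightarrow> norm (\<gamma>' \<tau>) \<le> L * norm (\<gamma> \<tau>)"
    and init: "norm (\<gamma> 0) * exp (L * \<bar>s\<bar>) < \<rho>"
  shows "\<forall>\<tau>\<in>closed_segment 0 s. norm (\<gamma> \<tau>) \<le> exp (L * \<bar>s\<bar>) * norm (\<gamma> 0)"
proof (cases "s \<ge> 0")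
  case True
  have seg: "closed_segment 0 s = {0..s}" using True by (simp add: closed_segment_eq_real_ivl)
  have g: "\<forall>\<tau>\<in>{0..s}. norm (\<gamma> \<tau>) \<le> exp (L * \<tau>) * norm (\<gamma> 0)"
    by (rule gronwall_norm_bound_forward[OF True L]) (use der bd init True seg in auto)
  show ?thesis
  proof
    fix \<tau> assume t: "\<tau> \<in> closed_segment 0 s"
    then have "norm (\<gamma> \<tau>) \<le> exp (L * \<tau>) * norm (\<gamma> 0)" using g seg by auto
    also have "\<dots> \<le> exp (L * \<bar>s\<bar>) * norm (\<gamma> 0)"
      using t seg True L by (intro mult_right_mono) (auto intro!: mult_left_mono)
    finally show "norm (\<gamma> \<tau>) \<le> exp (L * \<bar>s\<bar>) * norm (\<gamma> 0)" .
  qed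
next
  case False
  \<comment> \<open>Run the curve backwards and apply the forward bound.\<close>
  define \<delta> where "\<delta> t = \<gamma> (- t)" for t
  define \<delta>' where "\<delta>' t = - \<gamma>' (- t)" for t
  have seg: "closed_segment 0 s = {s..0}" using False by (simp add: closed_segment_eq_real_ivl)
  have s': "- s \<ge> 0" using False by simp
  have dder: "(\<delta> has_vector_derivative \<delta>' t) (at t)" if t: "t \<in> {0..-s}" for t
  proof -
    have "(uminus has_vector_derivative (-1::real)) (at t)"
      by (auto intro!: derivative_eq_intros simp: has_real_derivative_iff_has_vector_derivative[symmetric])
    moreover have "(\<gamma> has_vector_derivative \<gamma>' (- t)) (at (- t))" using der t seg by auto
    ultimately have "((\<gamma> \<circ> uminus) has_vector_derivative (-1::real) *\<^sub>R \<gamma>' (- t)) (at t)"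
      by (rule vector_diff_chain_at)
    then show ?thesis by (simp add: \<delta>_def[abs_def] \<delta>'_def o_def)
  qed
  have g: "\<forall>\<tau>\<in>{0..-s}. norm (\<delta> \<tau>) \<le> exp (L * \<tau>) * norm (\<delta> 0)"
    by (rule gronwall_norm_bound_forward[OF s' L dder]) (use bd init seg False in \<open>auto simp: \<delta>_def \<delta>'_def\<close>)
  show ?thesis
  proof
    fix \<tau> assume t: "\<tau> \<in> closed_segment 0 s"
    then have "- \<tau> \<in> {0..-s}" using seg by auto
    then have "norm (\<delta> (- \<tau>)) \<le> exp (L * (- \<tau>)) * norm (\<delta> 0)" using g by blast
    then have "norm (\<gamma> \<tau>) \<le> exp (L * (- \<tau>)) * norm (\<gamma> 0)" by (simp add: \<delta>_def)
    also have "\<dots> \<le> exp (L * \<bar>s\<bar>) * norm (\<gamma> 0)"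
      using t seg False L by (intro mult_right_mono) (auto intro!: mult_left_mono)
    finally show "norm (\<gamma> \<tau>) \<le> exp (L * \<bar>s\<bar>) * norm (\<gamma> 0)" .
  qed
qed

lemma norm_increment_le_vector_derivative_bound:
  fixes \<gamma> \<gamma>' :: "real \<Rightarrow> 'v::real_normed_vector"
  assumes der: "\<And>\<tau>. \<tau> \<in> closed_segment 0 s \<Longrightarrow> (\<gamma> has_vector_derivative \<gamma>' \<tau>) (at \<tau>)"
    and bd: "\<And>\<tau>. \<tau> \<in> closed_segment 0 s \<Longrightarrow> norm (\<gamma>' \<tau>) \<le> M"
  shows "norm (\<gamma> s - \<gamma> 0) \<le> M * \<bar>s\<bar>"
proof -
  have "norm (\<gamma> s - \<gamma> 0) \<le> M * norm (s - 0)"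
  proof (rule differentiable_bound[of "closed_segment 0 s" \<gamma> "\<lambda>\<tau> h. h *\<^sub>R \<gamma>' \<tau>"])
    show "convex (closed_segment 0 s)" by simp
  next
    fix x assume "x \<in> closed_segment 0 s"
    then show "(\<gamma> has_derivative (\<lambda>h. h *\<^sub>R \<gamma>' x)) (at x within closed_segment 0 s)"
      using der has_vector_derivative_def has_derivative_at_withinI by blast
  next
    fix x assume x: "x \<in> closed_segment 0 s"
    show "onorm (\<lambda>h. h *\<^sub>R \<gamma>' x) \<le> M"
    proof (rule onorm_le)
      fix h :: real
      show "norm (h *\<^sub>R \<gamma>' x) \<le> M * norm h" using bd[OF x]
        by (simp add: mult.commute[of M] mult_left_mono)
    qed
  qed auto
  then show ?thesis by simp
qed

text \<open>Along a curve driven by a field of size \<open>O(|z|\<^sup>k\<^sup>-\<^sup>1)\<close>, \<open>k \<ge> 2\<close>, Gronwall keeps the curve in a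
  ball proportional to its starting point, so the increment is \<open>O(|\<gamma> 0|\<^sup>k\<^sup>-\<^sup>1 |s|)\<close>.\<close>
lemma curve_increment_superlinear_field:
  fixes \<gamma> \<gamma>' :: "real \<Rightarrow> 'v::real_inner"
  assumes der: "\<And>\<tau>. \<tau> \<in> closed_segment 0 s \<Longrightarrow> (\<gamma> has_vector_derivative \<gamma>' \<tau>) (at \<tau>)"
    and field: "\<And>\<tau>. \<tau> \<in> closed_segment 0 s \<Longrightarrow> norm (\<gamma> \<tau>) < \<rho> \<Longrightarrow> norm (\<gamma>' \<tau>) \<le> C * norm (\<gamma> \<tau>) ^ (k - 1)"
    and \<rho>: "\<rho> \<le> 1" and C: "C \<ge> 0" and k: "k \<ge> 2"
    and sB: "\<bar>s\<bar> \<le> Bt" and init: "norm (\<gamma> 0) * exp (C * Bt) < \<rho>"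
  shows "norm (\<gamma> s - \<gamma> 0) \<le> C * (exp (C * Bt) * norm (\<gamma> 0)) ^ (k - 1) * \<bar>s\<bar>"
proof -
  have linear: "norm (\<gamma>' \<tau>) \<le> C * norm (\<gamma> \<tau>)" if "\<tau> \<in> closed_segment 0 s" "norm (\<gamma> \<tau>) < \<rho>" for \<tau>
  proof -
    have "norm (\<gamma> \<tau>) ^ (k - 1) \<le> norm (\<gamma> \<tau>)"
      using power_decreasing[of 1 "k - 1" "norm (\<gamma> \<tau>)"] that \<rho> k by simp
    then show ?thesis using field[OF that] C by (meson mult_left_mono order_trans)
  qed
  have exp_le: "exp (C * \<bar>s\<bar>) \<le> exp (C * Bt)" using sB C by (simp add: mult_left_mono)
  then have "norm (\<gamma> 0) * exp (C * \<bar>s\<bar>) < \<rho>"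
    using init by (meson mult_left_mono norm_ge_zero order_le_less_trans)
  then have "\<forall>\<tau>\<in>closed_segment 0 s. norm (\<gamma> \<tau>) \<le> exp (C * \<bar>s\<bar>) * norm (\<gamma> 0)"
    using gronwall_norm_bound[where \<gamma> = \<gamma> and \<gamma>' = \<gamma>' and s = s and L = C and \<rho> = \<rho>] der C linear
    by blast
  then have stays: "norm (\<gamma> \<tau>) \<le> exp (C * Bt) * norm (\<gamma> 0)" if "\<tau> \<in> closed_segment 0 s" for \<tau>
    using that exp_le by (meson mult_right_mono norm_ge_zero order_trans)
  have "norm (\<gamma>' \<tau>) \<le> C * (exp (C * Bt) * norm (\<gamma> 0)) ^ (k - 1)" if "\<tau> \<in> closed_segment 0 s" for \<tau>
  proof -
    have "norm (\<gamma> \<tau>) < \<rho>" using stays[OF that] init by (simp add: mult.commute)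
    then have "norm (\<gamma>' \<tau>) \<le> C * norm (\<gamma> \<tau>) ^ (k - 1)" using field that by blast
    also have "\<dots> \<le> C * (exp (C * Bt) * norm (\<gamma> 0)) ^ (k - 1)"
      using stays[OF that] C by (intro mult_left_mono power_mono) auto
    finally show ?thesis .
  qed
  then show ?thesis
    using norm_increment_le_vector_derivative_bound[where \<gamma> = \<gamma> and \<gamma>' = \<gamma>' and s = s] der by blast
qed

lemma sum_Basis_inner_mult:
  fixes e :: "'b::euclidean_space"
  assumes "e \<in> Basis"
  shows "(\<Sum>b\<in>Basis. (e \<bullet> b) * D b) = D e"
proof -
  have "(\<Sum>b\<in>Basis. (e \<bullet> b) * D b) = (\<Sum>b\<in>Basis. if b = e then D b else 0)"
    by (rule sum.cong) (use assms in \<open>auto simp: inner_Basis\<close>)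
  also have "\<dots> = D e" using assms by (simp add: sum.delta')
  finally show ?thesis .
qed

lemma pgrad_compose_coordinate_embedding:
  fixes F :: "'b::euclidean_space \<Rightarrow> real" and j :: "real^'n \<Rightarrow> 'b"
  assumes dF: "(F has_derivative (\<lambda>h. \<Sum>b\<in>Basis. (h \<bullet> b) * D b)) (at (j v))"
    and dj: "(j has_derivative jl) (at v)" and B: "\<And>i. jl (axis i 1) \<in> Basis"
  shows "pgrad (\<lambda>u. F (j u)) v = (\<chi> i. D (jl (axis i 1)))"
proof -
  have "frechet_derivative (\<lambda>u. F (j u)) (at v) = (\<lambda>h. \<Sum>b\<in>Basis. (jl h \<bullet> b) * D b)"
    using frechet_derivative_at[OF has_derivative_compose[OF dj dF]] by simp
  then show ?thesis by (simp add: pgrad_def sum_Basis_inner_mult[OF B])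
qed

lemma Pair_zero_axis_in_Basis: "((0::real^'n), axis i (1::real)) \<in> (Basis :: ((real^'n) \<times> (real^'n)) set)"
  by (auto simp: Basis_prod_def)

lemma Pair_axis_zero_in_Basis: "(axis i (1::real), (0::real^'n)) \<in> (Basis :: ((real^'n) \<times> (real^'n)) set)"
  by (auto simp: Basis_prod_def)

lemma Pair_zero_zero_axis_in_Basis: "((0::real), (0::real^'n), axis i (1::real)) \<in> (Basis :: (real \<times> (real^'n) \<times> (real^'n)) set)"
  by (auto simp: Basis_prod_def)

lemma Pair_one_zero_in_Basis: "((1::real), (0::(real^'n) \<times> (real^'n))) \<in> (Basis :: (real \<times> (real^'n) \<times> (real^'n)) set)"
  by (auto simp: Basis_prod_def)

lemma ham_field_partials:
  fixes p0 :: "real^'n \<Rightarrow> real^'n \<Rightarrow> real"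
  assumes sm: "smooth_on UNIV (\<lambda>(x, \<xi>). p0 x \<xi>)"
  shows "ham_field p0 w = ((\<chi> i. iter_pd [(0, axis i 1)] (\<lambda>(x, \<xi>). p0 x \<xi>) w),
                           - (\<chi> i. iter_pd [(axis i 1, 0)] (\<lambda>(x, \<xi>). p0 x \<xi>) w))"
proof -
  let ?P = "\<lambda>(x, \<xi>). p0 x \<xi>"
  have dP: "(?P has_derivative (\<lambda>h. \<Sum>b\<in>Basis. (h \<bullet> b) * iter_pd [b] ?P w')) (at w')" for w'
    using smooth_on_has_derivative[OF sm open_UNIV UNIV_I, of "[]"] by simp
  obtain x \<xi> where w: "w = (x, \<xi>)" by fastforce
  have d1: "((\<lambda>u. (x, u)) has_derivative (\<lambda>v. (0, v))) (at \<xi>)"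
    by (auto intro!: derivative_eq_intros)
  have d2: "((\<lambda>u. (u, \<xi>)) has_derivative (\<lambda>v. (v, 0))) (at x)"
    by (auto intro!: derivative_eq_intros)
  have g1: "pgrad (\<lambda>u. p0 x u) \<xi> = (\<chi> i. iter_pd [(0, axis i 1)] ?P w)"
  proof -
    have "pgrad (\<lambda>u. ?P (x, u)) \<xi> = (\<chi> i. iter_pd [((\<lambda>v. (0, v)) (axis i 1))] ?P w)"
      by (rule pgrad_compose_coordinate_embedding[OF _ d1 Pair_zero_axis_in_Basis, of ?P "\<lambda>b. iter_pd [b] ?P w"]) (use dP[of w] w in simp_all)
    then show ?thesis by (simp only: case_prod_conv)
  qed
  have g2: "pgrad (\<lambda>u. p0 u \<xi>) x = (\<chi> i. iter_pd [(axis i 1, 0)] ?P w)"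
  proof -
    have "pgrad (\<lambda>u. ?P (u, \<xi>)) x = (\<chi> i. iter_pd [((\<lambda>v. (v, 0)) (axis i 1))] ?P w)"
      by (rule pgrad_compose_coordinate_embedding[OF _ d2 Pair_axis_zero_in_Basis, of ?P "\<lambda>b. iter_pd [b] ?P w"]) (use dP[of w] w in simp_all)
    then show ?thesis by (simp only: case_prod_conv)
  qed
  show ?thesis unfolding ham_field_def w fst_conv snd_conv g1[unfolded w] g2[unfolded w] ..
qed

lemma ham_field_norm_bound:
  fixes p0 :: "real^'n \<Rightarrow> real^'n \<Rightarrow> real"
  assumes sm: "smooth_on UNIV (\<lambda>(x, \<xi>). p0 x \<xi>)" and w: "norm w \<le> \<rho>"
    and partials: "\<forall>w. norm w \<le> \<rho> \<longrightarrow> (\<forall>b\<in>Basis. \<bar>iter_pd [b] (\<lambda>(x, \<xi>). p0 x \<xi>) w\<bar> \<le> C * norm w ^ j)"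
  shows "norm (ham_field p0 w) \<le> 2 * real CARD('n) * C * norm w ^ j"
proof -
  let ?P = "\<lambda>(x, \<xi>). p0 x \<xi>"
  have column: "norm (\<chi> i. iter_pd [f i] ?P w) \<le> real CARD('n) * (C * norm w ^ j)"
    if "\<And>i. f i \<in> Basis" for f :: "'n \<Rightarrow> (real^'n) \<times> (real^'n)"
  proof -
    have "norm (\<chi> i. iter_pd [f i] ?P w) \<le> (\<Sum>i\<in>UNIV. \<bar>iter_pd [f i] ?P w\<bar>)"
      using norm_le_l1_cart[of "\<chi> i. iter_pd [f i] ?P w"] by simp
    also have "\<dots> \<le> (\<Sum>i\<in>(UNIV::'n set). C * norm w ^ j)"
      using partials w that by (intro sum_mono) blast
    finally show ?thesis by simp
  qed
  have "norm (ham_field p0 w) \<le> norm (\<chi> i. iter_pd [(0, axis i 1)] ?P w) + norm (- (\<chi> i. iter_pd [(axis i 1, 0)] ?P w))"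
    unfolding ham_field_partials[OF sm] by (rule norm_Pair_le)
  also have "\<dots> \<le> real CARD('n) * (C * norm w ^ j) + real CARD('n) * (C * norm w ^ j)"
    unfolding norm_minus_cancel by (intro add_mono column Pair_zero_axis_in_Basis Pair_axis_zero_in_Basis)
  finally show ?thesis by (simp add: algebra_simps)
qed

lemma ham_flow_increment:
  fixes p0 :: "real^'n \<Rightarrow> real^'n \<Rightarrow> real"
  assumes flow: "is_ham_flow p0 \<Omega> \<Phi>"
    and field: "\<And>w. norm w < \<rho> \<Longrightarrow> norm (ham_field p0 w) \<le> C * norm w ^ (k - 1)"
    and \<rho>: "\<rho> \<le> 1" and C: "C \<ge> 0" and k: "k \<ge> 2"
    and sw: "(s, w0) \<in> \<Omega>" and sB: "\<bar>s\<bar> \<le> Bt"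
    and init: "norm w0 * exp (C * Bt) < \<rho>"
  shows "norm (\<Phi> s w0 - w0) \<le> C * (exp (C * Bt) * norm w0) ^ (k - 1) * \<bar>s\<bar>"
proof -
  have start: "(0, w0) \<in> \<Omega>" "\<Phi> 0 w0 = w0" "is_interval {t. (t, w0) \<in> \<Omega>}"
    and der: "\<And>t. (t, w0) \<in> \<Omega> \<Longrightarrow> ((\<lambda>s. \<Phi> s w0) has_vector_derivative ham_field p0 (\<Phi> t w0)) (at t)"
    using flow unfolding is_ham_flow_def by blast+
  have seg: "closed_segment 0 s \<subseteq> {t. (t, w0) \<in> \<Omega>}"
    using is_interval_convex[OF start(3)] start(1) sw by (intro closed_segment_subset) auto
  define \<gamma> where "\<gamma> t = \<Phi> t w0" for t
  have "norm (\<gamma> s - \<gamma> 0) \<le> C * (exp (C * Bt) * norm (\<gamma> 0)) ^ (k - 1) * \<bar>s\<bar>"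
  proof (rule curve_increment_superlinear_field[where \<gamma>' = "\<lambda>t. ham_field p0 (\<gamma> t)", OF _ _ \<rho> C k sB])
    fix \<tau> assume "\<tau> \<in> closed_segment 0 s"
    then show "(\<gamma> has_vector_derivative ham_field p0 (\<gamma> \<tau>)) (at \<tau>)"
      using seg der unfolding \<gamma>_def[abs_def] by blast
    show "norm (\<gamma> \<tau>) < \<rho> \<Longrightarrow> norm (ham_field p0 (\<gamma> \<tau>)) \<le> C * norm (\<gamma> \<tau>) ^ (k - 1)"
      by (rule field)
  next
    show "norm (\<gamma> 0) * exp (C * Bt) < \<rho>" using init start(2) by (simp add: \<gamma>_def)
  qed
  then show ?thesis using start(2) by (simp add: \<gamma>_def)
qed

section \<open>The generating function\<close>

lemma compact_subset_closed_interval: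
  fixes K T :: "real set"
  assumes T: "is_interval T" "0 \<in> T" and K: "compact K" "K \<subseteq> T"
  shows "\<exists>a b. a \<le> 0 \<and> 0 \<le> b \<and> {a..b} \<subseteq> T \<and> K \<subseteq> {a..b}"
proof -
  let ?K0 = "insert 0 K"
  have bdd: "bdd_below ?K0" "bdd_above ?K0"
    using compact_imp_bounded[OF K(1)] by (auto intro: bounded_imp_bdd_below bounded_imp_bdd_above)
  have closed: "closed ?K0" using compact_imp_closed[OF K(1)] by simp
  have sub: "?K0 \<subseteq> T" using T(2) K(2) by simp
  have "Inf ?K0 \<in> T" by (rule subsetD[OF sub closed_contains_Inf[OF _ bdd(1) closed]]) simp
  moreover have "Sup ?K0 \<in> T" by (rule subsetD[OF sub closed_contains_Sup[OF _ bdd(2) closed]]) simp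
  ultimately have "{Inf ?K0..Sup ?K0} \<subseteq> T"
    using T(1) unfolding is_interval_1 by (meson atLeastAtMost_iff subsetI)
  moreover have bounds: "Inf ?K0 \<le> t \<and> t \<le> Sup ?K0" if "t \<in> ?K0" for t
    using cInf_lower[OF that bdd(1)] cSup_upper[OF that bdd(2)] by simp
  ultimately show ?thesis
    using bounds[of 0] by (intro exI[of _ "Inf ?K0"] exI[of _ "Sup ?K0"]) (simp add: subset_iff bounds)
qed

text \<open>Otherwise, by the intermediate value theorem, \<open>|f|\<close> would take the forbidden value \<open>\<delta>/2\<close>.\<close>
lemma connected_continuous_gap_zero:
  fixes f :: "real \<Rightarrow> 'a::real_normed_vector"
  assumes I: "connected I" and cont: "continuous_on I f" and t0: "t0 \<in> I" "f t0 = 0"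
    and \<delta>: "\<delta> > 0" and gap: "\<And>s. s \<in> I \<Longrightarrow> norm (f s) < \<delta> \<Longrightarrow> f s = 0"
    and s: "s \<in> I"
  shows "f s = 0"
proof (rule ccontr)
  assume "f s \<noteq> 0"
  then have "\<delta> \<le> norm (f s)" using gap s by force
  have seg: "closed_segment t0 s \<subseteq> I"
    using I t0 s by (simp add: closed_segment_subset is_interval_connected_1 is_interval_convex)
  have "\<delta> / 2 \<in> closed_segment (norm (f t0)) (norm (f s))"
    using \<open>\<delta> \<le> norm (f s)\<close> t0 \<delta> by (simp add: closed_segment_eq_real_ivl)
  then obtain s' where s': "s' \<in> closed_segment t0 s" "norm (f s') = \<delta> / 2"
    using IVT'_closed_segment_real[of "\<delta> / 2" "\<lambda>s. norm (f s)" t0 s]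
      continuous_on_norm[OF continuous_on_subset[OF cont seg]] by blast
  then show False using gap[of s'] seg \<delta> by auto
qed

text \<open>At \<open>t = 0\<close> the quotient is the junk value \<open>F / 0 = 0\<close>; the hypothesis forces \<open>F = 0\<close> there.\<close>
lemma divide_square_bound:
  fixes F C g t :: real
  assumes F: "\<bar>F\<bar> \<le> C * t\<^sup>2 * g" and Cg: "0 \<le> C * g"
  shows "F = t\<^sup>2 * (F / t\<^sup>2)" and "\<bar>F / t\<^sup>2\<bar> \<le> C * g"
proof -
  show "F = t\<^sup>2 * (F / t\<^sup>2)" using F by (cases "t = 0") auto
  show "\<bar>F / t\<^sup>2\<bar> \<le> C * g"
    using F Cg by (cases "t = 0") (auto simp: abs_divide field_simps)
qed

locale hj_generating_function =
  fixes p0 :: "real^'n \<Rightarrow> real^'n \<Rightarrow> real"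
    and \<Phi> :: "real \<Rightarrow> (real^'n) \<times> (real^'n) \<Rightarrow> (real^'n) \<times> (real^'n)"
    and \<Omega> :: "(real \<times> ((real^'n) \<times> (real^'n))) set"
    and S :: "real \<Rightarrow> real^'n \<Rightarrow> real^'n \<Rightarrow> real"
    and T :: "real set" and W :: "((real^'n) \<times> (real^'n)) set"
  assumes flow: "is_ham_flow p0 \<Omega> \<Phi>"
    and T_open: "open T" and T0: "0 \<in> T"
    and W_open: "open W" and W0: "0 \<in> W"
    and S_smooth: "smooth_on (T \<times> W) (\<lambda>(t, x, \<xi>). S t x \<xi>)"
    and gen: "\<forall>t\<in>T. \<forall>x \<xi>. (x, \<xi>) \<in> W \<longrightarrow>
                 (t, (pgrad (\<lambda>\<eta>. S t x \<eta>) \<xi>, \<xi>)) \<in> \<Omega> \<and>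
                 \<Phi> t (pgrad (\<lambda>\<eta>. S t x \<eta>) \<xi>, \<xi>) = (x, pgrad (\<lambda>y. S t y \<xi>) x)"
    and HJ: "\<forall>t\<in>T. \<forall>x \<xi>. (x, \<xi>) \<in> W \<longrightarrow>
                 deriv (\<lambda>s. S s x \<xi>) t + p0 x (pgrad (\<lambda>y. S t y \<xi>) x) = 0"
    and init: "\<forall>x \<xi>. (x, \<xi>) \<in> W \<longrightarrow> S 0 x \<xi> = inner x \<xi>"
begin

abbreviation S_joint :: "real \<times> (real^'n) \<times> (real^'n) \<Rightarrow> real" where
  "S_joint \<equiv> \<lambda>(t, x, \<xi>). S t x \<xi>"

text \<open>The gradient \<open>\<partial>\<^sub>\<xi> S\<close>, written with partial derivatives of the jointly smooth \<open>S\<close> so that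
  it is continuous in \<open>(t, x, \<xi>)\<close>; by the generating property it is the position of the point
  that the flow carries to \<open>(x, \<partial>\<^sub>x S)\<close> in time \<open>t\<close>.\<close>
definition dxi_S :: "real \<Rightarrow> (real^'n) \<times> (real^'n) \<Rightarrow> real^'n" where
  "dxi_S t z = (\<chi> i. iter_pd [(0, 0, axis i 1)] S_joint (t, z))"

lemma open_T_W: "open (T \<times> W)"
  using T_open W_open by (rule open_Times)

lemma pgrad_xi_eq_dxi_S:
  assumes "t \<in> T" "(x, \<xi>) \<in> W"
  shows "pgrad (\<lambda>\<eta>. S t x \<eta>) \<xi> = dxi_S t (x, \<xi>)"
proof -
  have dS: "(S_joint has_derivative (\<lambda>h. \<Sum>b\<in>Basis. (h \<bullet> b) * iter_pd [b] S_joint (t, x, \<xi>))) (at (t, x, \<xi>))"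
    using smooth_on_has_derivative[OF S_smooth open_T_W, of "(t, x, \<xi>)" "[]"] assms by simp
  have dj: "((\<lambda>u. (t, x, u)) has_derivative (\<lambda>v. (0, 0, v))) (at \<xi>)"
    by (auto intro!: derivative_eq_intros)
  have "pgrad (\<lambda>u. S_joint (t, x, u)) \<xi> = (\<chi> i. iter_pd [(0, 0, axis i 1)] S_joint (t, x, \<xi>))"
    by (rule pgrad_compose_coordinate_embedding[OF _ dj Pair_zero_zero_axis_in_Basis,
          of S_joint "\<lambda>b. iter_pd [b] S_joint (t, x, \<xi>)"]) (use dS in simp_all)
  then show ?thesis by (simp add: dxi_S_def)
qed

lemma S_has_time_derivative:
  assumes t: "t \<in> T" and z: "(x, \<xi>) \<in> W"
  shows "((\<lambda>s. S s x \<xi>) has_real_derivative - p0 x (pgrad (\<lambda>y. S t y \<xi>) x)) (at t)"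
proof -
  have "((\<lambda>s. iter_pd [] S_joint ((0, x, \<xi>) + s *\<^sub>R (1, 0))) has_real_derivative
           iter_pd [(1, 0)] S_joint ((0, x, \<xi>) + t *\<^sub>R (1, 0))) (at t)"
    by (rule smooth_on_has_real_derivative_along_line[OF S_smooth _ Pair_one_zero_in_Basis]) (use t z in simp_all)
  then have d: "((\<lambda>s. S s x \<xi>) has_real_derivative iter_pd [(1, 0)] S_joint (t, x, \<xi>)) (at t)"
    by simp
  with HJ t z have "iter_pd [(1, 0)] S_joint (t, x, \<xi>) = - p0 x (pgrad (\<lambda>y. S t y \<xi>) x)"
    using DERIV_imp_deriv[OF d] by force
  with d show ?thesis by simp
qed

lemma continuous_on_dxi_S_origin:
  assumes "{a..b} \<subseteq> T"
  shows "continuous_on {a..b} (\<lambda>s. dxi_S s 0)"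
  unfolding dxi_S_def
proof (intro continuous_on_vec_lambda)
  fix i :: 'n
  have "continuous_on (T \<times> W) (iter_pd [(0, 0, axis i 1)] S_joint)"
    by (rule smooth_on_continuous_on[OF S_smooth]) (simp add: Pair_zero_zero_axis_in_Basis)
  moreover have "(\<lambda>s. (s, 0::(real^'n) \<times> (real^'n))) ` {a..b} \<subseteq> T \<times> W" using assms W0 by auto
  ultimately show "continuous_on {a..b} (\<lambda>s. iter_pd [(0, 0, axis i 1)] S_joint (s, 0))"
    by (rule continuous_on_compose2[OF _ continuous_on_Pair[OF continuous_on_id continuous_on_const]])
qed

lemma dxi_S_initial: "dxi_S 0 0 = 0"
proof -
  define U where "U = (\<lambda>\<eta>::real^'n. (0::real^'n, \<eta>)) -` W"
  have U: "open U" "0 \<in> U"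
    using W0 by (auto simp: U_def zero_prod_def intro!: continuous_open_vimage[OF W_open] continuous_intros)
  have "((\<lambda>\<eta>::real^'n. 0::real) has_derivative (\<lambda>_. 0)) (at 0)" by simp
  then have "((\<lambda>\<eta>. S 0 0 \<eta>) has_derivative (\<lambda>_. 0)) (at 0)"
    by (rule has_derivative_transform_within_open[OF _ U]) (use init in \<open>simp add: U_def\<close>)
  then have "pgrad (\<lambda>\<eta>. S 0 0 \<eta>) 0 = 0"
    by (simp add: pgrad_def vec_eq_iff frechet_derivative_at[symmetric])
  then show ?thesis
    using pgrad_xi_eq_dxi_S[OF T0, of 0 0] W0 by (simp add: zero_prod_def)
qed

lemma dxi_S_lipschitz:
  assumes ab: "{a..b} \<subseteq> T" and ball: "cball 0 \<rho> \<subseteq> W"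
  shows "\<exists>A\<ge>0. \<forall>s\<in>{a..b}. \<forall>z\<in>cball 0 \<rho>. norm (dxi_S s z - dxi_S s 0) \<le> A * norm z"
proof -
  define Q where "Q = {a..b} \<times> cball (0::(real^'n) \<times> (real^'n)) \<rho>"
  have Q: "compact Q" "Q \<subseteq> T \<times> W" using ab ball by (auto simp: Q_def compact_Times)
  let ?second = "\<lambda>q. \<Sum>i\<in>Basis \<times> Basis. \<bar>iter_pd [fst i, snd i] S_joint q\<bar>"
  have "continuous_on (T \<times> W) ?second"
    by (intro continuous_intros smooth_on_continuous_on[OF S_smooth]) auto
  then obtain M0 where M0: "\<forall>q\<in>Q. \<bar>?second q\<bar> \<le> M0"
    using continuous_on_compact_abs_bound[OF _ Q] by blast
  define M where "M = max M0 0"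
  have M: "\<bar>iter_pd [c, e] S_joint q\<bar> \<le> M" if "c \<in> Basis" "e \<in> Basis" "q \<in> Q" for c e q
  proof -
    have "\<bar>iter_pd [c, e] S_joint q\<bar> \<le> ?second q"
      using member_le_sum[of "(c, e)" "Basis \<times> Basis" "\<lambda>i. \<bar>iter_pd [fst i, snd i] S_joint q\<bar>"] that
      by simp
    also have "\<dots> \<le> M" using M0 that(3) unfolding M_def by (meson abs_ge_self max.coboundedI1 order_trans)
    finally show ?thesis .
  qed
  define D where "D = real DIM(real \<times> (real^'n) \<times> (real^'n))"
  have "norm (dxi_S s z - dxi_S s 0) \<le> real CARD('n) * (D * M) * norm z"
    if s: "s \<in> {a..b}" and z: "z \<in> cball 0 \<rho>" for s z
  proof -
    have "\<bar>(dxi_S s z - dxi_S s 0) $ i\<bar> \<le> D * M * norm z" for i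
    proof -
      have "s \<in> T" using s ab by auto
      have "\<bar>iter_pd [(0, 0, axis i 1)] S_joint (s, z) - iter_pd [(0, 0, axis i 1)] S_joint (s, 0)\<bar>
          \<le> D * M * norm z"
        unfolding D_def
        by (rule smooth_on_partial_lipschitz_in_space[OF S_smooth T_open W_open \<open>s \<in> T\<close> ball
              Pair_zero_zero_axis_in_Basis _ z])
          (use M[OF _ Pair_zero_zero_axis_in_Basis] s in \<open>simp add: Q_def\<close>)
      then show ?thesis by (simp add: dxi_S_def)
    qed
    then have "norm (dxi_S s z - dxi_S s 0) \<le> (\<Sum>i\<in>(UNIV::'n set). D * M * norm z)"
      by (intro order_trans[OF norm_le_l1_cart] sum_mono)
    then show ?thesis by (simp add: mult.assoc)
  qed
  moreover have "real CARD('n) * (D * M) \<ge> 0" by (simp add: D_def M_def)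
  ultimately show ?thesis by blast
qed

end

lemma ham_field_and_lipschitz_bounds:
  fixes p0 :: "real^'n \<Rightarrow> real^'n \<Rightarrow> real"
  assumes sm: "smooth_on UNIV (\<lambda>(x, \<xi>). p0 x \<xi>)" and C: "C \<ge> 0"
    and partials: "\<forall>w. norm w \<le> \<rho> \<longrightarrow> (\<forall>b\<in>Basis. \<bar>iter_pd [b] (\<lambda>(x, \<xi>). p0 x \<xi>) w\<bar> \<le> C * norm w ^ j)"
  shows "\<exists>L\<ge>0. (\<forall>w. norm w < \<rho> \<longrightarrow> norm (ham_field p0 w) \<le> L * norm w ^ j) \<and>
           (\<forall>u v R. R \<le> \<rho> \<longrightarrow> norm u \<le> R \<longrightarrow> norm v \<le> R \<longrightarrow>
              \<bar>case_prod p0 u - case_prod p0 v\<bar> \<le> L * R ^ j * norm (u - v))"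
proof -
  define L where "L = (2 * real CARD('n) + real DIM((real^'n) \<times> (real^'n))) * C"
  have "norm (ham_field p0 w) \<le> L * norm w ^ j" if "norm w < \<rho>" for w
  proof -
    have "norm (ham_field p0 w) \<le> 2 * real CARD('n) * C * norm w ^ j"
      using that by (intro ham_field_norm_bound[OF sm _ partials]) simp
    also have "\<dots> \<le> L * norm w ^ j" using C by (intro mult_right_mono) (auto simp: L_def algebra_simps)
    finally show ?thesis .
  qed
  moreover have "\<bar>case_prod p0 u - case_prod p0 v\<bar> \<le> L * R ^ j * norm (u - v)"
    if R: "R \<le> \<rho>" "norm u \<le> R" "norm v \<le> R" for u v :: "(real^'n) \<times> (real^'n)" and R
  proof -
    have "\<bar>case_prod p0 u - case_prod p0 v\<bar> \<le> real DIM((real^'n) \<times> (real^'n)) * (C * R ^ j) * norm (u - v)"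
      by (rule smooth_on_lipschitz_on_cball[OF sm _ C R]) (use partials in blast)
    also have "\<dots> \<le> L * R ^ j * norm (u - v)"
      using C order_trans[OF norm_ge_zero R(2)] by (intro mult_right_mono) (auto simp: L_def)
    finally show ?thesis .
  qed
  moreover have "L \<ge> 0" using C by (simp add: L_def)
  ultimately show ?thesis by blast
qed

lemma critical_point_local_bounds:
  fixes p0 :: "real^'n \<Rightarrow> real^'n \<Rightarrow> real" and pp :: "nat \<Rightarrow> (real^'n) \<times> (real^'n) \<Rightarrow> real"
  assumes sm: "smooth_on UNIV (\<lambda>(x, \<xi>). p0 x \<xi>)"
    and crit: "((\<lambda>(x, \<xi>). p0 x \<xi>) has_derivative (\<lambda>_. 0)) (at 0)"
    and k: "k \<ge> 2" and kN: "k \<le> N"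
    and hom: "\<forall>j\<in>{k..N}. homogeneous_deg j (pp j)"
    and expansion: "\<exists>r>0. \<exists>C. \<forall>z. norm z < r \<longrightarrow>
                      \<bar>p0 (fst z) (snd z) - Ec - (\<Sum>j=k..N. pp j z)\<bar> \<le> C * norm z ^ (N + 1)"
  shows "\<exists>\<rho>>0. \<rho> \<le> 1 \<and> (\<exists>L\<ge>0.
           (\<forall>w. norm w \<le> \<rho> \<longrightarrow> \<bar>case_prod p0 w - Ec - pp k w\<bar> \<le> L * norm w ^ (k + 1)) \<and>
           (\<forall>w. norm w < \<rho> \<longrightarrow> norm (ham_field p0 w) \<le> L * norm w ^ (k - 1)) \<and>
           (\<forall>u v R. R \<le> \<rho> \<longrightarrow> norm u \<le> R \<longrightarrow> norm v \<le> R \<longrightarrow>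
              \<bar>case_prod p0 u - case_prod p0 v\<bar> \<le> L * R ^ (k - 1) * norm (u - v)))"
proof -
  have "\<exists>r>0. \<exists>C. \<forall>z. norm z < r \<longrightarrow> \<bar>case_prod p0 z - Ec - (\<Sum>j=k..N. pp j z)\<bar> \<le> C * norm z ^ (N + 1)"
    using expansion by (simp add: case_prod_beta')
  from expansion_remainder_and_partials_bound[OF sm crit k kN hom this]
  obtain \<rho> C where \<rho>: "0 < \<rho>" "\<rho> \<le> 1" and C: "C \<ge> 0"
    and near0: "\<forall>w. norm w \<le> \<rho> \<longrightarrow> \<bar>case_prod p0 w - Ec - pp k w\<bar> \<le> C * norm w ^ (k + 1) \<and>
                  (\<forall>b\<in>Basis. \<bar>iter_pd [b] (case_prod p0) w\<bar> \<le> C * norm w ^ (k - 1))"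
    by blast
  obtain L where L: "L \<ge> 0"
    and field: "\<forall>w. norm w < \<rho> \<longrightarrow> norm (ham_field p0 w) \<le> L * norm w ^ (k - 1)"
    and lipschitz: "\<forall>u v R. R \<le> \<rho> \<longrightarrow> norm u \<le> R \<longrightarrow> norm v \<le> R \<longrightarrow>
                      \<bar>case_prod p0 u - case_prod p0 v\<bar> \<le> L * R ^ (k - 1) * norm (u - v)"
    using ham_field_and_lipschitz_bounds[OF sm C, of \<rho> "k - 1"] near0 by blast
  have "\<bar>case_prod p0 w - Ec - pp k w\<bar> \<le> max C L * norm w ^ (k + 1)" if "norm w \<le> \<rho>" for w
  proof -
    have "\<bar>case_prod p0 w - Ec - pp k w\<bar> \<le> C * norm w ^ (k + 1)" using near0 that by blast
    also have "\<dots> \<le> max C L * norm w ^ (k + 1)" by (intro mult_right_mono) auto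
    finally show ?thesis .
  qed
  moreover have "norm (ham_field p0 w) \<le> max C L * norm w ^ (k - 1)" if "norm w < \<rho>" for w
  proof -
    have "norm (ham_field p0 w) \<le> L * norm w ^ (k - 1)" using field that by blast
    also have "\<dots> \<le> max C L * norm w ^ (k - 1)" by (intro mult_right_mono) auto
    finally show ?thesis .
  qed
  moreover have "\<bar>case_prod p0 u - case_prod p0 v\<bar> \<le> max C L * R ^ (k - 1) * norm (u - v)"
    if "R \<le> \<rho>" "norm u \<le> R" "norm v \<le> R" for u v :: "(real^'n) \<times> (real^'n)" and R
  proof -
    have "0 \<le> R" using that(2) order_trans[OF norm_ge_zero] by blast
    have "\<bar>case_prod p0 u - case_prod p0 v\<bar> \<le> L * R ^ (k - 1) * norm (u - v)" using lipschitz that by blast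
    also have "\<dots> \<le> max C L * R ^ (k - 1) * norm (u - v)"
      using \<open>0 \<le> R\<close> by (intro mult_right_mono) auto
    finally show ?thesis .
  qed
  ultimately show ?thesis using \<rho> C by (intro exI[of _ \<rho>] conjI exI[of _ "max C L"]) auto
qed

text \<open>The two consequences of the vanishing of \<open>p\<^sub>0 - E\<^sub>c\<close> to order \<open>k\<close> that the flow estimates use.\<close>
locale degenerate_hj_generating_function = hj_generating_function +
  fixes k :: nat and \<rho>1 L :: real
  assumes k: "k \<ge> 3" and \<rho>1: "0 < \<rho>1" "\<rho>1 \<le> 1" and L: "L \<ge> 0"
    and field: "\<And>w. norm w < \<rho>1 \<Longrightarrow> norm (ham_field p0 w) \<le> L * norm w ^ (k - 1)"
    and lipschitz: "\<And>u v R. R \<le> \<rho>1 \<Longrightarrow> norm u \<le> R \<Longrightarrow> norm v \<le> R \<Longrightarrow>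
                      \<bar>case_prod p0 u - case_prod p0 v\<bar> \<le> L * R ^ (k - 1) * norm (u - v)"
begin

lemma generating_increment:
  assumes s: "s \<in> T" "\<bar>s\<bar> \<le> Bt" and z: "(x, \<xi>) \<in> W"
    and small: "norm (dxi_S s (x, \<xi>), \<xi>) * exp (L * Bt) < \<rho>1"
  shows "norm ((x, pgrad (\<lambda>y. S s y \<xi>) x) - (dxi_S s (x, \<xi>), \<xi>))
      \<le> L * (exp (L * Bt) * norm (dxi_S s (x, \<xi>), \<xi>)) ^ (k - 1) * \<bar>s\<bar>"
proof -
  have "(s, (pgrad (\<lambda>\<eta>. S s x \<eta>) \<xi>, \<xi>)) \<in> \<Omega> \<and>
      \<Phi> s (pgrad (\<lambda>\<eta>. S s x \<eta>) \<xi>, \<xi>) = (x, pgrad (\<lambda>y. S s y \<xi>) x)"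
    using gen s z by blast
  then show ?thesis
    unfolding pgrad_xi_eq_dxi_S[OF s(1) z]
    using ham_flow_increment[OF flow field \<rho>1(2) L _ _ s(2) small] k by simp
qed

lemma dxi_S_origin_gap:
  assumes ab: "{a..b} \<subseteq> T"
  shows "\<exists>\<delta>>0. \<forall>s\<in>{a..b}. norm (dxi_S s 0) < \<delta> \<longrightarrow> dxi_S s 0 = 0"
proof -
  define Bt where "Bt = max \<bar>a\<bar> \<bar>b\<bar>"
  have sB: "\<bar>s\<bar> \<le> Bt" if "s \<in> {a..b}" for s using that by (auto simp: Bt_def)
  define E where "E = exp (L * Bt)"
  have E1: "E \<ge> 1" using L by (simp add: E_def Bt_def)
  define Kd where "Kd = L * Bt * E^2"
  have Kd0: "Kd \<ge> 0" using L by (simp add: Kd_def Bt_def)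
  define \<delta> where "\<delta> = min (\<rho>1 / (2 * E)) (1 / (Kd + 1))"
  have "dxi_S s 0 = 0" if s: "s \<in> {a..b}" and n_small: "norm (dxi_S s 0) < \<delta>" for s
  proof (rule ccontr)
    assume "dxi_S s 0 \<noteq> 0"
    have "s \<in> T" using s ab by auto
    define n where "n = norm (dxi_S s 0)"
    have n0: "n > 0" using \<open>dxi_S s 0 \<noteq> 0\<close> by (simp add: n_def)
    have nE: "n * E \<le> \<rho>1 / 2"
      using n_small E1 by (simp add: n_def \<delta>_def field_simps)
    have "n \<le> norm ((0, pgrad (\<lambda>y. S s y 0) 0) - (dxi_S s (0, 0), 0))"
      using norm_fst_le[of "- dxi_S s 0" "pgrad (\<lambda>y. S s y 0) 0"] by (simp add: n_def zero_prod_def)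
    also have "\<dots> \<le> L * (E * n) ^ (k - 1) * \<bar>s\<bar>"
      using generating_increment[OF \<open>s \<in> T\<close> sB[OF s], of 0 0] W0 nE \<rho>1
      by (simp add: n_def E_def zero_prod_def norm_Pair)
    also have "\<dots> \<le> L * (E * n) ^ 2 * Bt"
    proof (intro mult_mono mult_left_mono power_decreasing)
      show "E * n \<le> 1" using nE \<rho>1 by (simp add: mult.commute)
    qed (use L n0 E1 k sB[OF s] in auto)
    also have "\<dots> = Kd * n * n" by (simp add: Kd_def power2_eq_square algebra_simps)
    finally have "n \<le> Kd * n * n" .
    moreover have "n * (Kd + 1) < 1"
      using n_small Kd0 by (simp add: n_def \<delta>_def field_simps)
    then have "Kd * n < 1" using n0 by (simp add: algebra_simps)
    ultimately show False using n0 by (simp add: mult_le_cancel_right1)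
  qed
  moreover have "\<delta> > 0" using \<rho>1 E1 Kd0 by (simp add: \<delta>_def)
  ultimately show ?thesis by blast
qed

lemma dxi_S_origin:
  assumes ab: "{a..b} \<subseteq> T" "a \<le> 0" "0 \<le> b" and s: "s \<in> {a..b}"
  shows "dxi_S s 0 = 0"
proof -
  obtain \<delta> where "\<delta> > 0" and gap: "\<forall>s\<in>{a..b}. norm (dxi_S s 0) < \<delta> \<longrightarrow> dxi_S s 0 = 0"
    using dxi_S_origin_gap[OF ab(1)] by blast
  show ?thesis
    by (rule connected_continuous_gap_zero[OF connected_Icc continuous_on_dxi_S_origin[OF ab(1)] _
          dxi_S_initial \<open>\<delta> > 0\<close> _ s]) (use ab gap in auto)
qed

text \<open>Since \<open>\<partial>\<^sub>\<xi> S\<close> vanishes at the origin and is Lipschitz, the flow starts at a point of size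
  \<open>O(|z|)\<close>, so over time \<open>s\<close> the momentum moves by \<open>O(|z|\<^sup>k\<^sup>-\<^sup>1 |s|)\<close>.\<close>
lemma momentum_increment_bound:
  assumes ab: "{a..b} \<subseteq> T" "a \<le> 0" "0 \<le> b"
  shows "\<exists>r>0. 2 * r \<le> \<rho>1 \<and> (\<exists>K\<ge>0. \<forall>s\<in>{a..b}. \<forall>x \<xi>. norm (x, \<xi>) < r \<longrightarrow> (x, \<xi>) \<in> W \<and>
           norm (pgrad (\<lambda>y. S s y \<xi>) x - \<xi>) \<le> K * norm (x, \<xi>) ^ (k - 1) * \<bar>s\<bar> \<and>
           norm (pgrad (\<lambda>y. S s y \<xi>) x - \<xi>) \<le> norm (x, \<xi>))"
proof -
  define Bt where "Bt = max \<bar>a\<bar> \<bar>b\<bar>"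
  have sB: "\<bar>s\<bar> \<le> Bt" if "s \<in> {a..b}" for s using that by (auto simp: Bt_def)
  have Bt0: "Bt \<ge> 0" by (simp add: Bt_def)
  define E where "E = exp (L * Bt)"
  have E1: "E \<ge> 1" using L Bt0 by (simp add: E_def)
  obtain \<rho>0 where \<rho>0: "\<rho>0 > 0" "cball 0 \<rho>0 \<subseteq> W" using W_open W0 open_contains_cball by blast
  obtain A where A: "A \<ge> 0"
    and lip: "\<forall>s\<in>{a..b}. \<forall>z\<in>cball 0 \<rho>0. norm (dxi_S s z - dxi_S s 0) \<le> A * norm z"
    using dxi_S_lipschitz[OF ab(1) \<rho>0(2)] by blast
  define K where "K = L * (E * (A + 1)) ^ (k - 1)"
  have K0: "K \<ge> 0" using L E1 A by (simp add: K_def)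
  define r where "r = min (min \<rho>0 (\<rho>1 / 2)) (min (\<rho>1 / (2 * ((A + 1) * E))) (1 / (K * Bt + 1)))"
  have r0: "r > 0" using \<rho>0 \<rho>1 A E1 K0 Bt0 by (simp add: r_def add_nonneg_pos)
  have r_min: "r \<le> \<rho>0" "r \<le> \<rho>1 / 2" "r \<le> \<rho>1 / (2 * ((A + 1) * E))" "r \<le> 1 / (K * Bt + 1)"
    unfolding r_def by (meson min.cobounded1 min.cobounded2 order_trans)+
  have "(A + 1) * E > 0" "K * Bt + 1 > 0" using A E1 K0 Bt0 by (simp_all add: add_nonneg_pos)
  then have r_le: "r \<le> \<rho>0" "2 * r \<le> \<rho>1" "(A + 1) * E * r \<le> \<rho>1 / 2" "(K * Bt + 1) * r \<le> 1"
    using r_min by (simp_all add: field_simps)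
  have "(x, \<xi>) \<in> W \<and> norm (pgrad (\<lambda>y. S s y \<xi>) x - \<xi>) \<le> K * norm (x, \<xi>) ^ (k - 1) * \<bar>s\<bar> \<and>
        norm (pgrad (\<lambda>y. S s y \<xi>) x - \<xi>) \<le> norm (x, \<xi>)"
    if s: "s \<in> {a..b}" and z: "norm (x, \<xi>) < r" for s x \<xi>
  proof (intro conjI)
    define nz where "nz = norm (x, \<xi>)"
    have nz: "0 \<le> nz" "nz < r" using z by (simp_all add: nz_def)
    have zc: "(x, \<xi>) \<in> cball 0 \<rho>0" using nz r_le by (simp add: nz_def)
    then show zW: "(x, \<xi>) \<in> W" using \<rho>0 by auto
    have sT: "s \<in> T" using s ab by auto
    have "norm (dxi_S s (x, \<xi>)) \<le> A * nz"
      using lip s zc dxi_S_origin[OF ab s] unfolding nz_def by fastforce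
    then have w0: "norm (dxi_S s (x, \<xi>), \<xi>) \<le> (A + 1) * nz"
      using norm_Pair_le[of "dxi_S s (x, \<xi>)" \<xi>] norm_snd_le[of \<xi> x] by (simp add: nz_def algebra_simps)
    have "norm (dxi_S s (x, \<xi>), \<xi>) * E \<le> (A + 1) * nz * E"
      using w0 E1 by (intro mult_right_mono) auto
    also have "\<dots> \<le> (A + 1) * r * E"
      using nz A E1 by (intro mult_right_mono mult_left_mono) auto
    finally have "norm (dxi_S s (x, \<xi>), \<xi>) * E \<le> (A + 1) * E * r"
      by (simp add: mult_ac)
    then have small: "norm (dxi_S s (x, \<xi>), \<xi>) * exp (L * Bt) < \<rho>1"
      using r_le(3) \<rho>1(1) unfolding E_def by linarith
    have "norm (pgrad (\<lambda>y. S s y \<xi>) x - \<xi>) \<le> norm ((x, pgrad (\<lambda>y. S s y \<xi>) x) - (dxi_S s (x, \<xi>), \<xi>))"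
      using norm_snd_le[of "pgrad (\<lambda>y. S s y \<xi>) x - \<xi>" "x - dxi_S s (x, \<xi>)"] by simp
    also have "\<dots> \<le> L * (E * norm (dxi_S s (x, \<xi>), \<xi>)) ^ (k - 1) * \<bar>s\<bar>"
      using generating_increment[OF sT sB[OF s] zW small] by (simp add: E_def)
    also have "\<dots> \<le> L * (E * ((A + 1) * nz)) ^ (k - 1) * \<bar>s\<bar>"
      using w0 L E1 by (intro mult_right_mono mult_left_mono power_mono) auto
    also have "\<dots> = K * nz ^ (k - 1) * \<bar>s\<bar>" by (simp add: K_def power_mult_distrib mult.assoc)
    finally show increment: "norm (pgrad (\<lambda>y. S s y \<xi>) x - \<xi>) \<le> K * norm (x, \<xi>) ^ (k - 1) * \<bar>s\<bar>"
      by (simp add: nz_def)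
    have "K * nz ^ (k - 1) * \<bar>s\<bar> \<le> K * Bt * nz ^ (k - 2) * nz"
    proof -
      have "k - 1 = Suc (k - 2)" using k by simp
      then have "nz ^ (k - 1) = nz ^ (k - 2) * nz" by (simp add: mult.commute)
      moreover have "K * nz ^ (k - 2) * nz * \<bar>s\<bar> \<le> K * nz ^ (k - 2) * nz * Bt"
        using sB[OF s] K0 nz by (intro mult_left_mono) auto
      ultimately show ?thesis by (simp add: mult_ac)
    qed
    also have "\<dots> \<le> K * Bt * r * nz"
    proof -
      have "nz ^ (k - 2) \<le> nz" using power_decreasing[of 1 "k - 2" nz] nz r_le \<rho>1 k by simp
      also have "\<dots> \<le> r" using nz by simp
      finally show ?thesis using K0 Bt0 nz by (intro mult_right_mono mult_left_mono) auto
    qed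
    also have "\<dots> \<le> nz" using r_le(4) nz K0 Bt0 mult_right_mono[of "K * Bt * r" 1 nz]
      by (simp add: algebra_simps)
    finally show "norm (pgrad (\<lambda>y. S s y \<xi>) x - \<xi>) \<le> norm (x, \<xi>)"
      using increment by (simp add: nz_def)
  qed
  then show ?thesis using r0 r_le K0 by blast
qed

lemma hj_remainder_bound:
  assumes ab: "{a..b} \<subseteq> T" "a \<le> 0" "0 \<le> b"
  shows "\<exists>r>0. \<exists>C\<ge>0. \<forall>t\<in>{a..b}. \<forall>x \<xi>. norm (x, \<xi>) < r \<longrightarrow>
           \<bar>S t x \<xi> - x \<bullet> \<xi> + t * p0 x \<xi>\<bar> \<le> C * t\<^sup>2 * norm (x, \<xi>) ^ (k + 1)"
proof -
  obtain r K where r: "r > 0" "2 * r \<le> \<rho>1" and K: "K \<ge> 0"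
    and momentum: "\<forall>s\<in>{a..b}. \<forall>x \<xi>. norm (x, \<xi>) < r \<longrightarrow> (x, \<xi>) \<in> W \<and>
           norm (pgrad (\<lambda>y. S s y \<xi>) x - \<xi>) \<le> K * norm (x, \<xi>) ^ (k - 1) * \<bar>s\<bar> \<and>
           norm (pgrad (\<lambda>y. S s y \<xi>) x - \<xi>) \<le> norm (x, \<xi>)"
    using momentum_increment_bound[OF ab] by blast
  define C where "C = L * 2 ^ (k - 1) * K"
  have C0: "C \<ge> 0" using L K by (simp add: C_def)
  have "\<bar>S t x \<xi> - x \<bullet> \<xi> + t * p0 x \<xi>\<bar> \<le> C * t\<^sup>2 * norm (x, \<xi>) ^ (k + 1)"
    if t: "t \<in> {a..b}" and z: "norm (x, \<xi>) < r" for t x \<xi>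
  proof -
    define nz where "nz = norm (x, \<xi>)"
    have nz: "0 \<le> nz" "nz \<le> 1" "2 * nz \<le> \<rho>1" using z r \<rho>1 by (simp_all add: nz_def)
    have seg: "closed_segment 0 t \<subseteq> {a..b}" using t ab by (auto simp: closed_segment_eq_real_ivl)
    have zW: "(x, \<xi>) \<in> W" using momentum t z by blast
    define F where "F s = S s x \<xi> - x \<bullet> \<xi> + s * p0 x \<xi>" for s
    have "\<bar>F t - F 0 - t * 0\<bar> \<le> C * nz ^ (2 * k - 2) * \<bar>t\<bar> * \<bar>t\<bar>"
    proof (rule real_increment_linear_bound)
      fix s assume s: "s \<in> closed_segment 0 t"
      then have sT: "s \<in> T" using seg ab by auto
      show "(F has_real_derivative p0 x \<xi> - p0 x (pgrad (\<lambda>y. S s y \<xi>) x)) (at s)"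
        unfolding F_def using S_has_time_derivative[OF sT zW]
        by (auto intro!: derivative_eq_intros)
      define \<eta> where "\<eta> = pgrad (\<lambda>y. S s y \<xi>) x"
      have "s \<in> {a..b}" using seg s by auto
      note m = momentum[rule_format, OF this z, folded \<eta>_def nz_def]
      have "\<bar>s\<bar> \<le> \<bar>t\<bar>" using s by (auto simp: closed_segment_eq_real_ivl split: if_splits)
      then have "K * nz ^ (k - 1) * \<bar>s\<bar> \<le> K * nz ^ (k - 1) * \<bar>t\<bar>"
        using K nz by (intro mult_left_mono) auto
      then have step: "norm (\<eta> - \<xi>) \<le> K * nz ^ (k - 1) * \<bar>t\<bar>" "norm (\<eta> - \<xi>) \<le> nz"
        using m by linarith+
      have "norm (x, \<eta>) \<le> norm (x, \<xi>) + norm (\<eta> - \<xi>)"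
        using norm_triangle_ineq[of "(x, \<xi>)" "(0, \<eta> - \<xi>)"] by (simp add: norm_Pair)
      then have "norm (x, \<eta>) \<le> 2 * nz" using step(2) by (simp add: nz_def)
      then have "\<bar>p0 x \<xi> - p0 x \<eta>\<bar> \<le> L * (2 * nz) ^ (k - 1) * norm ((x, \<xi>) - (x, \<eta>))"
        using lipschitz[of "2 * nz" "(x, \<xi>)" "(x, \<eta>)"] nz by (simp add: nz_def)
      also have "\<dots> \<le> L * (2 * nz) ^ (k - 1) * (K * nz ^ (k - 1) * \<bar>t\<bar>)"
        using step(1) L nz by (intro mult_left_mono) (auto simp: norm_Pair norm_minus_commute)
      also have "\<dots> = C * nz ^ (2 * k - 2) * \<bar>t\<bar>"
      proof -
        have "2 * k - 2 = (k - 1) + (k - 1)" using k by simp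
        then show ?thesis by (simp add: C_def power_add power_mult_distrib mult_ac)
      qed
      finally show "\<bar>p0 x \<xi> - p0 x (pgrad (\<lambda>y. S s y \<xi>) x) - 0\<bar> \<le> C * nz ^ (2 * k - 2) * \<bar>t\<bar>"
        by (simp add: \<eta>_def)
    qed
    moreover have "F 0 = 0" using init zW by (simp add: F_def)
    ultimately have "\<bar>F t\<bar> \<le> C * nz ^ (2 * k - 2) * t\<^sup>2"
      by (simp add: power2_eq_square mult_ac)
    also have "\<dots> \<le> C * nz ^ (k + 1) * t\<^sup>2"
      using C0 nz k by (intro mult_right_mono mult_left_mono power_decreasing) auto
    finally have "\<bar>F t\<bar> \<le> C * nz ^ (k + 1) * t\<^sup>2" .
    then show ?thesis by (simp add: F_def nz_def mult_ac)
  qed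
  then show ?thesis using r C0 by blast
qed

lemma hj_expansion:
  assumes ab: "{a..b} \<subseteq> T" "a \<le> 0" "0 \<le> b"
  shows "\<exists>G. \<exists>r>0. \<exists>C. \<forall>t\<in>{a..b}. \<forall>x \<xi>. norm (x, \<xi>) < r \<longrightarrow>
           S t x \<xi> - x \<bullet> \<xi> = - t * (p0 x \<xi> + t * G t (x, \<xi>)) \<and> \<bar>G t (x, \<xi>)\<bar> \<le> C * norm (x, \<xi>) ^ (k + 1)"
proof -
  obtain r C where "r > 0" "C \<ge> 0" and remainder: "\<forall>t\<in>{a..b}. \<forall>x \<xi>. norm (x, \<xi>) < r \<longrightarrow>
      \<bar>S t x \<xi> - x \<bullet> \<xi> + t * p0 x \<xi>\<bar> \<le> C * t\<^sup>2 * norm (x, \<xi>) ^ (k + 1)"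
    using hj_remainder_bound[OF ab] by blast
  define G where "G t z = - (S t (fst z) (snd z) - fst z \<bullet> snd z + t * case_prod p0 z) / t\<^sup>2" for t z
  have "S t x \<xi> - x \<bullet> \<xi> = - t * (p0 x \<xi> + t * G t (x, \<xi>)) \<and> \<bar>G t (x, \<xi>)\<bar> \<le> C * norm (x, \<xi>) ^ (k + 1)"
    if "t \<in> {a..b}" "norm (x, \<xi>) < r" for t x \<xi>
  proof -
    have "\<bar>S t x \<xi> - x \<bullet> \<xi> + t * p0 x \<xi>\<bar> \<le> C * t\<^sup>2 * norm (x, \<xi>) ^ (k + 1)"
      using remainder that by blast
    note factor = divide_square_bound[OF this mult_nonneg_nonneg[OF \<open>C \<ge> 0\<close> zero_le_power[OF norm_ge_zero]]]
    define q where "q = (S t x \<xi> - x \<bullet> \<xi> + t * p0 x \<xi>) / t\<^sup>2"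
    have "G t (x, \<xi>) = - q" by (simp add: G_def q_def minus_divide_left)
    moreover have "S t x \<xi> = x \<bullet> \<xi> - t * p0 x \<xi> + t\<^sup>2 * q"
      using factor(1) unfolding q_def by linarith
    moreover have "\<bar>q\<bar> \<le> C * norm (x, \<xi>) ^ (k + 1)" using factor(2) unfolding q_def .
    ultimately show ?thesis by (simp add: algebra_simps power2_eq_square)
  qed
  then show ?thesis using \<open>r > 0\<close> by blast
qed

end

theorem lemma4:
  fixes p0 :: "real^'n \<Rightarrow> real^'n \<Rightarrow> real" and Ec :: real and k N :: nat
    and pp :: "nat \<Rightarrow> (real^'n) \<times> (real^'n) \<Rightarrow> real"
    and \<Phi> :: "real \<Rightarrow> (real^'n) \<times> (real^'n) \<Rightarrow> (real^'n) \<times> (real^'n)"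
    and \<Omega> :: "(real \<times> ((real^'n) \<times> (real^'n))) set"
    and S :: "real \<Rightarrow> real^'n \<Rightarrow> real^'n \<Rightarrow> real"
    and T :: "real set" and W :: "((real^'n) \<times> (real^'n)) set"
  assumes p0_smooth: "smooth_on UNIV (\<lambda>(x, \<xi>). p0 x \<xi>)"
    and crit: "((\<lambda>(x, \<xi>). p0 x \<xi>) has_derivative (\<lambda>_. 0)) (at 0)"
    and k_gt: "k > 2" and kN: "k \<le> N"
    and hom: "\<forall>j\<in>{k..N}. homogeneous_deg j (pp j)"
    and expansion: "\<exists>r>0. \<exists>C. \<forall>z. norm z < r \<longrightarrow>
                      \<bar>p0 (fst z) (snd z) - Ec - (\<Sum>j=k..N. pp j z)\<bar> \<le> C * norm z ^ (N + 1)"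
    and flow: "is_ham_flow p0 \<Omega> \<Phi>"
    and T_open: "open T" and T_int: "is_interval T" and T0: "0 \<in> T"
    and W_open: "open W" and W0: "0 \<in> W"
    and S_smooth: "smooth_on (T \<times> W) (\<lambda>(t, x, \<xi>). S t x \<xi>)"
    and gen: "\<forall>t\<in>T. \<forall>x \<xi>. (x, \<xi>) \<in> W \<longrightarrow>
                 (t, (pgrad (\<lambda>\<eta>. S t x \<eta>) \<xi>, \<xi>)) \<in> \<Omega> \<and>
                 \<Phi> t (pgrad (\<lambda>\<eta>. S t x \<eta>) \<xi>, \<xi>) = (x, pgrad (\<lambda>y. S t y \<xi>) x)"
    and HJ: "\<forall>t\<in>T. \<forall>x \<xi>. (x, \<xi>) \<in> W \<longrightarrow>
                 deriv (\<lambda>s. S s x \<xi>) t + p0 x (pgrad (\<lambda>y. S t y \<xi>) x) = 0"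
    and init: "\<forall>x \<xi>. (x, \<xi>) \<in> W \<longrightarrow> S 0 x \<xi> = inner x \<xi>"
  shows "\<exists>R :: (real^'n) \<times> (real^'n) \<Rightarrow> real.
           (\<exists>r>0. \<exists>C. \<forall>z. norm z < r \<longrightarrow> \<bar>R z\<bar> \<le> C * norm z ^ (k + 1)) \<and>
           (\<forall>K. compact K \<and> K \<subseteq> T \<longrightarrow>
              (\<exists>G :: real \<Rightarrow> (real^'n) \<times> (real^'n) \<Rightarrow> real. \<exists>r>0. \<exists>C.
                 \<forall>t\<in>K. \<forall>x \<xi>. norm (x, \<xi>) < r \<longrightarrow>
                   S t x \<xi> - inner x \<xi> + t * Ec = - t * (pp k (x, \<xi>) + R (x, \<xi>) + t * G t (x, \<xi>)) \<and>
                   \<bar>G t (x, \<xi>)\<bar> \<le> C * norm (x, \<xi>) ^ (k + 1)))"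
proof -
  obtain \<rho> L where \<rho>: "0 < \<rho>" "\<rho> \<le> 1" and L: "L \<ge> 0"
    and remainder: "\<forall>w. norm w \<le> \<rho> \<longrightarrow> \<bar>case_prod p0 w - Ec - pp k w\<bar> \<le> L * norm w ^ (k + 1)"
    and field: "\<forall>w. norm w < \<rho> \<longrightarrow> norm (ham_field p0 w) \<le> L * norm w ^ (k - 1)"
    and lipschitz: "\<forall>u v R. R \<le> \<rho> \<longrightarrow> norm u \<le> R \<longrightarrow> norm v \<le> R \<longrightarrow>
                      \<bar>case_prod p0 u - case_prod p0 v\<bar> \<le> L * R ^ (k - 1) * norm (u - v)"
    using critical_point_local_bounds[OF p0_smooth crit _ kN hom expansion] k_gt by auto
  show ?thesis
  proof (intro exI[of _ "\<lambda>z. case_prod p0 z - Ec - pp k z"] conjI allI impI)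
    show "\<exists>r>0. \<exists>C. \<forall>z. norm z < r \<longrightarrow> \<bar>case_prod p0 z - Ec - pp k z\<bar> \<le> C * norm z ^ (k + 1)"
      using remainder \<rho> by (meson less_imp_le)
    fix K assume "compact K \<and> K \<subseteq> T"
    then obtain a b where ab: "{a..b} \<subseteq> T" "a \<le> 0" "0 \<le> b" "K \<subseteq> {a..b}"
      using compact_subset_closed_interval[OF T_int T0] by blast
    interpret degenerate_hj_generating_function p0 \<Phi> \<Omega> S T W k \<rho> L
      using flow T_open T0 W_open W0 S_smooth gen HJ init k_gt \<rho> L field lipschitz
      by unfold_locales auto
    obtain G r C where "r > 0" and expansion: "\<forall>t\<in>{a..b}. \<forall>x \<xi>. norm (x, \<xi>) < r \<longrightarrow>
        S t x \<xi> - x \<bullet> \<xi> = - t * (p0 x \<xi> + t * G t (x, \<xi>)) \<and> \<bar>G t (x, \<xi>)\<bar> \<le> C * norm (x, \<xi>) ^ (k + 1)"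
      using hj_expansion[OF ab(1-3)] by blast
    then show "\<exists>G. \<exists>r>0. \<exists>C. \<forall>t\<in>K. \<forall>x \<xi>. norm (x, \<xi>) < r \<longrightarrow>
        S t x \<xi> - x \<bullet> \<xi> + t * Ec = - t * (pp k (x, \<xi>) + (case_prod p0 (x, \<xi>) - Ec - pp k (x, \<xi>)) + t * G t (x, \<xi>)) \<and>
        \<bar>G t (x, \<xi>)\<bar> \<le> C * norm (x, \<xi>) ^ (k + 1)"
      using ab(4) by (intro exI[of _ G] exI[of _ r] exI[of _ C] conjI ballI allI impI) (auto simp: algebra_simps)
  qed
qed

end
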